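(* Let $N\ge1$, consider the fuzzy sphere calculus described in the context with basis one-forms $e_k=1\otimes\sigma_k$ and basis two-forms $f_m=\tfrac12\sum_{j,k}\epsilon_{mjk}\,e_j\wedge e_k$, and let $\nabla$ be the connection with $\nabla(e_k)=\sum_je_j\otimes_{A_N}\omega_{jk}$, $\omega_{jk}=-\tfrac12\sum_l\epsilon_{jkl}e_l$. Define its curvature on the basis by $$R_\nabla(e_j)=\sum_k\Big[(\mathrm{id}\otimes\wedge)\big(\nabla(e_k)\otimes_{A_N}\omega_{kj}\big)+e_k\otimes_{A_N}d\omega_{kj}\Big]\in\mathcal{E}\otimes_{A_N}\Omega^2(A_N).$$ Then $$R_\nabla(e_j)=-\tfrac14\sum_{p,q}\epsilon_{jpq}\,e_p\otimes_{A_N}f_q=\tfrac14\sum_pe_p\otimes_{A_N}(e_p\wedge e_j).$$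
   Context: Fuzzy sphere spectral triple: $J_1,J_2,J_3$ basis of $su(2)$ with $[J_k,J_l]=\sum_m\epsilon_{klm}J_m$ ($\epsilon_{123}=1$, totally antisymmetric); $\rho_{n/2}$ the $(n+1)$-dimensional irreducible unitary representation; $K_N=\oplus_{n=0}^N\mathbb{C}^{n+1}$, $X_k=\oplus_{n=0}^N\rho_{n/2}(J_k)$, $A_N=B(K_N)$, $H_N=K_N\otimes\mathbb{C}^2$ with $a\mapsto a\otimes1$, $\sigma_k=\sqrt{-1}\tau_k$ ($\tau_k$ Pauli matrices), $D_N=\sum_kX_k\otimes\sigma_k$. Differential calculus: $\mathcal{E}=\Omega^1(A_N)=\{\sum a_j[D_N,b_j]\}$ (free with basis $e_1,e_2,e_3$), $da=[D_N,a]$; $\Omega^2(A_N)=\mathcal{S}/J^2$ with $\mathcal{S}$ the span of $a_0[D_N,a_1][D_N,a_2]$ and $J^2=\{\sum_j[D_N,a_j][D_N,b_j]:\sum_ja_j[D_N,b_j]=0\}$; $\wedge$ is operator multiplication followed by the quotient; $d(\sum a_j[D_N,b_j])=[\sum_j[D_N,a_j][D_N,b_j]]$. $(\mathrm{id}\otimes\wedge)(x\otimes y\otimes z)=x\otimes(y\wedge z)$. (This $\nabla$ is the Levi-Civita connection of the metric $g(e_k\otimes e_j)=\delta_{kj}$.) *)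

theory Defs
  imports Complex_Main "Jordan_Normal_Form.Matrix"
begin

text \<open>Indices k of the basis J_1, J_2, J_3 of su(2) are the naturals 1, 2, 3.\<close>

definition eps :: "nat \<Rightarrow> nat \<Rightarrow> nat \<Rightarrow> complex" where
  "eps i j k =
     (if (i,j,k) \<in> {(1,2,3),(2,3,1),(3,1,2)} then 1
      else if (i,j,k) \<in> {(1,3,2),(3,2,1),(2,1,3)} then -1 else 0)"

definition spin_c :: "nat \<Rightarrow> nat \<Rightarrow> complex" where
  "spin_c n a = complex_of_real (sqrt (real (a * (n + 1 - a))))"

text \<open>rho n k = rho_{n/2}(J_k): the standard (n+1)-dimensional irreducible unitary
  representation, J_k = -i S_k with S_k the usual spin-n/2 matrices
  (basis |n/2, n/2 - a>, a = 0..n).\<close>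
definition rho :: "nat \<Rightarrow> nat \<Rightarrow> complex mat" where
  "rho n k = mat (n+1) (n+1) (\<lambda>(r,c).
     if k = 1 then (if r + 1 = c then - \<i> * spin_c n c / 2
                    else if c + 1 = r then - \<i> * spin_c n r / 2 else 0)
     else if k = 2 then (if r + 1 = c then - spin_c n c / 2
                    else if c + 1 = r then spin_c n r / 2 else 0)
     else if k = 3 then (if r = c then - \<i> * (of_nat n / 2 - of_nat r) else 0)
     else 0)"

definition dimK :: "nat \<Rightarrow> nat" where
  "dimK N = (\<Sum>n\<le>N. n + 1)"

definition hdim :: "nat \<Rightarrow> nat" where
  "hdim N = 2 * dimK N"

definition Xop :: "nat \<Rightarrow> nat \<Rightarrow> complex mat" where
  "Xop N k = diag_block_mat (map (\<lambda>n. rho n k) [0..<Suc N])"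

text \<open>Tensor product of an operator on K_N with a 2x2 matrix, acting on
  H_N = K_N \<otimes> C^2 (basis vector (i, alpha) has index 2 i + alpha).\<close>
definition kron2 :: "complex mat \<Rightarrow> complex mat \<Rightarrow> complex mat" where
  "kron2 a s = mat (2 * dim_row a) (2 * dim_col a)
     (\<lambda>(i,j). a $$ (i div 2, j div 2) * s $$ (i mod 2, j mod 2))"

definition tau :: "nat \<Rightarrow> complex mat" where
  "tau k = mat 2 2 (\<lambda>(i,j).
     if k = 1 then (if i \<noteq> j then 1 else 0)
     else if k = 2 then (if i = 0 \<and> j = 1 then - \<i> else if i = 1 \<and> j = 0 then \<i> else 0)
     else if k = 3 then (if i = j then (if i = 0 then 1 else -1) else 0)
     else 0)"

definition sigma :: "nat \<Rightarrow> complex mat" where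
  "sigma k = \<i> \<cdot>\<^sub>m tau k"

definition amp :: "complex mat \<Rightarrow> complex mat" where
  "amp a = kron2 a (1\<^sub>m 2)"

definition DN :: "nat \<Rightarrow> complex mat" where
  "DN N = kron2 (Xop N 1) (sigma 1) + kron2 (Xop N 2) (sigma 2) + kron2 (Xop N 3) (sigma 3)"

definition cD :: "nat \<Rightarrow> complex mat \<Rightarrow> complex mat" where
  "cD N x = DN N * x - x * DN N"

definition AN :: "nat \<Rightarrow> complex mat set" where
  "AN N = carrier_mat (dimK N) (dimK N)"

definition msum :: "nat \<Rightarrow> complex mat list \<Rightarrow> complex mat" where
  "msum n xs = foldr (+) xs (0\<^sub>m n n)"

definition Omega1 :: "nat \<Rightarrow> complex mat set" where
  "Omega1 N = {msum (hdim N) (map (\<lambda>(a,b). amp a * cD N (amp b)) ps) | ps.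
                 set ps \<subseteq> AN N \<times> AN N}"

definition Sforms :: "nat \<Rightarrow> complex mat set" where
  "Sforms N = {msum (hdim N) (map (\<lambda>(a0,a1,a2). amp a0 * cD N (amp a1) * cD N (amp a2)) ts) | ts.
                 set ts \<subseteq> AN N \<times> AN N \<times> AN N}"

definition J2 :: "nat \<Rightarrow> complex mat set" where
  "J2 N = {msum (hdim N) (map (\<lambda>(a,b). cD N (amp a) * cD N (amp b)) ps) | ps.
             set ps \<subseteq> AN N \<times> AN N \<and>
             msum (hdim N) (map (\<lambda>(a,b). amp a * cD N (amp b)) ps) = 0\<^sub>m (hdim N) (hdim N)}"

text \<open>Class of w in Omega^2 = S / J^2 (the coset w + J^2).\<close>
definition om2 :: "nat \<Rightarrow> complex mat \<Rightarrow> complex mat set" where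
  "om2 N w = {w + j | j. j \<in> J2 N}"

definition Omega2 :: "nat \<Rightarrow> complex mat set set" where
  "Omega2 N = om2 N ` Sforms N"

definition wedge :: "nat \<Rightarrow> complex mat \<Rightarrow> complex mat \<Rightarrow> complex mat set" where
  "wedge N x y = om2 N (x * y)"

text \<open>d(sum a_j [D,b_j]) = [sum [D,a_j][D,b_j]] (independent of the representation).\<close>
definition dform :: "nat \<Rightarrow> complex mat \<Rightarrow> complex mat set" where
  "dform N x = om2 N (msum (hdim N) (map (\<lambda>(a,b). cD N (amp a) * cD N (amp b))
      (SOME ps. set ps \<subseteq> AN N \<times> AN N \<and>
                x = msum (hdim N) (map (\<lambda>(a,b). amp a * cD N (amp b)) ps))))"

definition eb :: "nat \<Rightarrow> nat \<Rightarrow> complex mat" where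
  "eb N k = kron2 (1\<^sub>m (dimK N)) (sigma k)"

definition omega :: "nat \<Rightarrow> nat \<Rightarrow> nat \<Rightarrow> complex mat" where
  "omega N j k = (- 1 / 2) \<cdot>\<^sub>m msum (hdim N) [eps j k l \<cdot>\<^sub>m eb N l. l \<leftarrow> [1,2,3]]"

text \<open>f_m = 1/2 sum eps_{mjk} e_j \<and> e_k, computed as the class of the corresponding
  sum of products (the quotient map S \<rightarrow> S/J^2 is linear).\<close>
definition fb :: "nat \<Rightarrow> nat \<Rightarrow> complex mat set" where
  "fb N m = om2 N ((1 / 2) \<cdot>\<^sub>m msum (hdim N)
              [eps m j k \<cdot>\<^sub>m (eb N j * eb N k). j \<leftarrow> [1,2,3], k \<leftarrow> [1,2,3]])"

text \<open>Formal finite C-linear combinations sum c_i (x_i \<otimes> w_i), represented as lists,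
  and their coefficient functions in the free vector space on E \<times> Omega^2.\<close>
type_synonym fsum = "(complex \<times> complex mat \<times> complex mat set) list"

definition fs :: "fsum \<Rightarrow> (complex mat \<times> complex mat set \<Rightarrow> complex)" where
  "fs xs = (\<lambda>p. sum_list (map (\<lambda>(c,x,w). if (x,w) = p then c else 0) xs))"

text \<open>Defining relations of the balanced tensor product over A_N:
  additivity in both slots, C-linearity in the first slot, and (x a) \<otimes> w = x \<otimes> (a w).\<close>
definition tgens :: "nat \<Rightarrow> fsum set" where
  "tgens N =
     {[(1, x + x', W), (-1, x, W), (-1, x', W)] | x x' W.
        x \<in> Omega1 N \<and> x' \<in> Omega1 N \<and> W \<in> Omega2 N}
   \<union> {[(1, x, om2 N (u + v)), (-1, x, om2 N u), (-1, x, om2 N v)] | x u v.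
        x \<in> Omega1 N \<and> u \<in> Sforms N \<and> v \<in> Sforms N}
   \<union> {[(1, c \<cdot>\<^sub>m x, W), (- c, x, W)] | c x W.
        x \<in> Omega1 N \<and> W \<in> Omega2 N}
   \<union> {[(1, x * amp a, om2 N u), (-1, x, om2 N (amp a * u))] | x a u.
        x \<in> Omega1 N \<and> a \<in> AN N \<and> u \<in> Sforms N}"

inductive_set tzero :: "nat \<Rightarrow> (complex mat \<times> complex mat set \<Rightarrow> complex) set" for N where
  tz_zero: "(\<lambda>_. 0) \<in> tzero N"
| tz_gen: "g \<in> tgens N \<Longrightarrow> fs g \<in> tzero N"
| tz_add: "t \<in> tzero N \<Longrightarrow> t' \<in> tzero N \<Longrightarrow> (\<lambda>p. t p + t' p) \<in> tzero N"
| tz_smult: "t \<in> tzero N \<Longrightarrow> (\<lambda>p. c * t p) \<in> tzero N"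

definition teq :: "nat \<Rightarrow> fsum \<Rightarrow> fsum \<Rightarrow> bool" where
  "teq N xs ys \<longleftrightarrow> (\<lambda>p. fs xs p - fs ys p) \<in> tzero N"

definition nabla :: "nat \<Rightarrow> nat \<Rightarrow> (complex \<times> complex mat \<times> complex mat) list" where
  "nabla N k = [(1, eb N j, omega N j k). j \<leftarrow> [1,2,3]]"

definition idwedge :: "nat \<Rightarrow> (complex \<times> complex mat \<times> complex mat) list \<Rightarrow> complex mat \<Rightarrow> fsum" where
  "idwedge N t z = [(c, x, wedge N y z). (c, x, y) \<leftarrow> t]"

definition curv :: "nat \<Rightarrow> nat \<Rightarrow> fsum" where
  "curv N j = concat [idwedge N (nabla N k) (omega N k j). k \<leftarrow> [1,2,3]]
              @ [(1, eb N k, dform N (omega N k j)). k \<leftarrow> [1,2,3]]"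

end

theory Submission
  imports Defs
begin

(* The spin-1/2 summand of K_N (present because N >= 1) supplies explicit universal forms
   sum a [D,b] built from matrix units: they show that every e_l is a one-form with d e_l = [e_l],
   and that every operator a (x) 1 lies in the junk J^2.  Hence a two-form 1 (x) M is the class of
   sum_q c_q e_q, where M = tr M / 2 + sum_q c_q sigma_q, and the relations of the balanced tensor
   product rewrite e_p (x) [1 (x) M] as sum_q c_q e_p (x) [e_q].  The connection forms, their
   products, d omega, f_q and e_p wedge e_j all have the shape 1 (x) M, so each of the three formal
   sums reduces to the same normal form 1/4 sum eps_jpq e_p (x) [e_q]. *)

section \<open>Matrices on \<open>H\<^sub>N = K\<^sub>N \<otimes> \<complex>\<^sup>2\<close>\<close>

lemma index_mult_mat_sum:
  assumes "i < dim_row A" "j < dim_col B" "dim_col A = dim_row B"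
  shows "(A * B) $$ (i,j) = (\<Sum>s<dim_row B. A $$ (i,s) * B $$ (s,j))"
  using assms by (simp add: scalar_prod_def atLeast0LessThan)

lemma mult_mat2_index:
  "A \<in> carrier_mat 2 2 \<Longrightarrow> B \<in> carrier_mat 2 2 \<Longrightarrow> a < 2 \<Longrightarrow> b < 2 \<Longrightarrow>
   (A * B) $$ (a,b) = A $$ (a,0) * B $$ (0,b) + A $$ (a,1) * B $$ (1,b)"
  by (subst index_mult_mat_sum) (auto simp: numeral_2_eq_2)

lemma sum_lessThan_double: "(\<Sum>l<2 * (n::nat). f l) = (\<Sum>l<n. f (2 * l) + f (2 * l + 1))"
  by (induction n) (simp_all add: sum.distrib algebra_simps)

lemma mod_2_cases: "(I::nat) mod 2 = 0 \<or> I mod 2 = 1"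
  by auto

lemma msum_carrier: "set xs \<subseteq> carrier_mat n n \<Longrightarrow> msum n xs \<in> carrier_mat n n"
  unfolding msum_def by (induction xs) auto

lemma msum_dim [simp]: "dim_row (msum n xs) = n" "dim_col (msum n xs) = n"
  unfolding msum_def by (induction xs) simp_all

lemma msum_index:
  "set xs \<subseteq> carrier_mat n n \<Longrightarrow> i < n \<Longrightarrow> j < n \<Longrightarrow>
   msum n xs $$ (i,j) = sum_list (map (\<lambda>x. x $$ (i,j)) xs)"
proof (induction xs)
  case (Cons x xs)
  then show ?case using msum_carrier[of xs n] by (simp add: msum_def)
qed (simp add: msum_def)

lemma msum_append:
  "set xs \<subseteq> carrier_mat n n \<Longrightarrow> set ys \<subseteq> carrier_mat n n \<Longrightarrow>
   msum n (xs @ ys) = msum n xs + msum n ys"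
proof (induction xs)
  case Nil
  then show ?case using msum_carrier[of ys n] by (simp add: msum_def)
next
  case (Cons x xs)
  then have "x \<in> carrier_mat n n" "msum n xs \<in> carrier_mat n n" "msum n ys \<in> carrier_mat n n"
    using msum_carrier by auto
  with Cons show ?case by (simp add: msum_def)
qed

lemma msum_smult:
  "set xs \<subseteq> carrier_mat n n \<Longrightarrow> msum n (map (\<lambda>x. c \<cdot>\<^sub>m x) xs) = c \<cdot>\<^sub>m msum n xs"
proof (induction xs)
  case (Cons x xs)
  then have "x \<in> carrier_mat n n" "msum n xs \<in> carrier_mat n n" using msum_carrier by auto
  with Cons show ?case by (simp add: msum_def add_smult_distrib_left_mat)
qed (simp add: msum_def)

lemma kron2_dim [simp]: "dim_row (kron2 a s) = 2 * dim_row a" "dim_col (kron2 a s) = 2 * dim_col a"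
  unfolding kron2_def by simp_all

lemma kron2_index:
  "i < 2 * dim_row a \<Longrightarrow> j < 2 * dim_col a \<Longrightarrow>
   kron2 a s $$ (i,j) = a $$ (i div 2, j div 2) * s $$ (i mod 2, j mod 2)"
  unfolding kron2_def by simp

lemma kron2_carrier [simp]: "a \<in> carrier_mat n m \<Longrightarrow> kron2 a s \<in> carrier_mat (2 * n) (2 * m)"
  by auto

lemma kron2_mult:
  assumes "a \<in> carrier_mat n n" "b \<in> carrier_mat n n" "s \<in> carrier_mat 2 2" "t \<in> carrier_mat 2 2"
  shows "kron2 a s * kron2 b t = kron2 (a * b) (s * t)"
proof (rule eq_matI)
  fix i j assume "i < dim_row (kron2 (a * b) (s * t))" "j < dim_col (kron2 (a * b) (s * t))"
  then have i: "i < 2 * n" and j: "j < 2 * n" using assms by auto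
  have "(kron2 a s * kron2 b t) $$ (i,j) = (\<Sum>l<2 * n. kron2 a s $$ (i,l) * kron2 b t $$ (l,j))"
    using assms i j by (subst index_mult_mat_sum) auto
  also have "\<dots> = (\<Sum>l<n. a $$ (i div 2, l) * b $$ (l, j div 2) *
      (s $$ (i mod 2, 0) * t $$ (0, j mod 2) + s $$ (i mod 2, 1) * t $$ (1, j mod 2)))"
    unfolding sum_lessThan_double
  proof (intro sum.cong refl)
    fix l assume "l \<in> {..<n}"
    moreover have "(2 * l + 1) mod 2 = 1" "(2 * l + 1) div 2 = l" by auto
    ultimately show "kron2 a s $$ (i, 2 * l) * kron2 b t $$ (2 * l, j)
        + kron2 a s $$ (i, 2 * l + 1) * kron2 b t $$ (2 * l + 1, j)
      = a $$ (i div 2, l) * b $$ (l, j div 2)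
        * (s $$ (i mod 2, 0) * t $$ (0, j mod 2) + s $$ (i mod 2, 1) * t $$ (1, j mod 2))"
      using assms i j by (simp add: kron2_index algebra_simps)
  qed
  also have "\<dots> = (a * b) $$ (i div 2, j div 2) * (s * t) $$ (i mod 2, j mod 2)"
    using assms i j
    by (simp add: index_mult_mat_sum[of _ a] mult_mat2_index sum_distrib_right del: index_mult_mat(1))
  also have "\<dots> = kron2 (a * b) (s * t) $$ (i,j)"
    using assms i j by (simp add: kron2_index)
  finally show "(kron2 a s * kron2 b t) $$ (i,j) = kron2 (a * b) (s * t) $$ (i,j)" .
qed (use assms in auto)

lemma sigma_carrier [simp]: "sigma k \<in> carrier_mat 2 2"
  unfolding sigma_def tau_def by simp

lemma sigma_dim [simp]: "dim_row (sigma k) = 2" "dim_col (sigma k) = 2"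
  using carrier_matD[OF sigma_carrier] by auto

definition pauli :: "nat \<Rightarrow> nat \<Rightarrow> nat \<Rightarrow> complex" where
  "pauli k a b =
     (if k = 1 then (if a \<noteq> b then \<i> else 0)
      else if k = 2 then (if a = 0 \<and> b = 1 then 1 else if a = 1 \<and> b = 0 then -1 else 0)
      else if k = 3 then (if a = b then (if a = 0 then \<i> else - \<i>) else 0)
      else 0)"

lemma sigma_index: "a < 2 \<Longrightarrow> b < 2 \<Longrightarrow> sigma k $$ (a,b) = pauli k a b"
  unfolding sigma_def tau_def pauli_def by (auto simp: less_2_cases_iff)

lemma sigma_mult_index:
  "a < 2 \<Longrightarrow> b < 2 \<Longrightarrow> (sigma k * sigma m) $$ (a,b) = pauli k a 0 * pauli m 0 b + pauli k a 1 * pauli m 1 b"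
  by (simp add: mult_mat2_index sigma_index del: index_mult_mat(1))

lemma dimK_conv_sum_list: "dimK N = sum_list (map (\<lambda>n. n + 1) [0..<Suc N])"
  unfolding dimK_def by (induction N) (simp_all add: atMost_Suc)

lemma Xop_carrier [simp]: "Xop N k \<in> carrier_mat (dimK N) (dimK N)"
proof -
  have "map dim_row (map (\<lambda>n. rho n k) [0..<Suc N]) = map (\<lambda>n. n + 1) [0..<Suc N]"
       "map dim_col (map (\<lambda>n. rho n k) [0..<Suc N]) = map (\<lambda>n. n + 1) [0..<Suc N]"
    by (simp_all add: rho_def)
  then show ?thesis
    unfolding Xop_def by (intro carrier_matI) (simp_all only: dim_diag_block_mat dimK_conv_sum_list)
qed

lemma Xop_dim [simp]: "dim_row (Xop N k) = dimK N" "dim_col (Xop N k) = dimK N"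
  using carrier_matD[OF Xop_carrier] by auto

lemma amp_carrier [simp]: "a \<in> carrier_mat (dimK N) (dimK N) \<Longrightarrow> amp a \<in> carrier_mat (hdim N) (hdim N)"
  by (simp add: amp_def hdim_def)

lemma amp_dim [simp]: "dim_row (amp a) = 2 * dim_row a" "dim_col (amp a) = 2 * dim_col a"
  unfolding amp_def by simp_all

lemma amp_index:
  "a \<in> carrier_mat (dimK N) (dimK N) \<Longrightarrow> I < hdim N \<Longrightarrow> J < hdim N \<Longrightarrow>
   amp a $$ (I,J) = (if I mod 2 = J mod 2 then a $$ (I div 2, J div 2) else 0)"
  unfolding amp_def hdim_def by (auto simp: kron2_index)

lemma amp_smult: "amp (c \<cdot>\<^sub>m a) = c \<cdot>\<^sub>m amp a"
  unfolding amp_def by (rule eq_matI) (auto simp: kron2_index)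

lemma kron2_one_carrier [simp]: "kron2 (1\<^sub>m (dimK N)) M \<in> carrier_mat (hdim N) (hdim N)"
  unfolding hdim_def by simp

lemma kron2_one_index:
  "M \<in> carrier_mat 2 2 \<Longrightarrow> I < hdim N \<Longrightarrow> J < hdim N \<Longrightarrow>
   kron2 (1\<^sub>m (dimK N)) M $$ (I,J) = (if I div 2 = J div 2 then M $$ (I mod 2, J mod 2) else 0)"
  unfolding hdim_def by (auto simp: kron2_index)

lemma kron2_one_mult:
  "M \<in> carrier_mat 2 2 \<Longrightarrow> M' \<in> carrier_mat 2 2 \<Longrightarrow>
   kron2 (1\<^sub>m (dimK N)) M * kron2 (1\<^sub>m (dimK N)) M' = kron2 (1\<^sub>m (dimK N)) (M * M')"
  using kron2_mult[of "1\<^sub>m (dimK N)" "dimK N" "1\<^sub>m (dimK N)" M M'] by simp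

lemma eb_carrier [simp]: "eb N l \<in> carrier_mat (hdim N) (hdim N)"
  unfolding eb_def by simp

lemma eb_dim [simp]: "dim_row (eb N l) = hdim N" "dim_col (eb N l) = hdim N"
  using carrier_matD[OF eb_carrier] by auto

lemma eb_index:
  "I < hdim N \<Longrightarrow> J < hdim N \<Longrightarrow> eb N l $$ (I,J) = (if I div 2 = J div 2 then pauli l (I mod 2) (J mod 2) else 0)"
  unfolding eb_def by (simp add: kron2_one_index sigma_index)

lemma eb_mult_eb: "eb N p * eb N q = kron2 (1\<^sub>m (dimK N)) (sigma p * sigma q)"
  unfolding eb_def by (simp add: kron2_one_mult)

lemma DN_carrier [simp]: "DN N \<in> carrier_mat (hdim N) (hdim N)"
  by (simp add: DN_def hdim_def)

lemma cD_carrier [simp]: "x \<in> carrier_mat (hdim N) (hdim N) \<Longrightarrow> cD N x \<in> carrier_mat (hdim N) (hdim N)"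
  unfolding cD_def by (auto intro!: minus_carrier_mat)

lemma commutator_smult:
  fixes A B :: "'a :: comm_ring mat"
  assumes "A \<in> carrier_mat n n" "B \<in> carrier_mat n n"
  shows "A * (c \<cdot>\<^sub>m B) - (c \<cdot>\<^sub>m B) * A = c \<cdot>\<^sub>m (A * B - B * A)"
proof -
  have "A * (c \<cdot>\<^sub>m B) = c \<cdot>\<^sub>m (A * B)" "(c \<cdot>\<^sub>m B) * A = c \<cdot>\<^sub>m (B * A)"
    using mult_smult_distrib[OF assms] mult_smult_assoc_mat[OF assms(2,1)] by auto
  then show ?thesis using assms by (intro eq_matI) (auto simp: algebra_simps)
qed

lemma cD_smult: "x \<in> carrier_mat (hdim N) (hdim N) \<Longrightarrow> cD N (c \<cdot>\<^sub>m x) = c \<cdot>\<^sub>m cD N x"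
  unfolding cD_def using DN_carrier by (rule commutator_smult)

definition Xcomm :: "nat \<Rightarrow> nat \<Rightarrow> complex mat \<Rightarrow> complex mat" where
  "Xcomm N k b = Xop N k * b - b * Xop N k"

lemma Xcomm_carrier [simp]: "b \<in> carrier_mat (dimK N) (dimK N) \<Longrightarrow> Xcomm N k b \<in> carrier_mat (dimK N) (dimK N)"
  unfolding Xcomm_def by (auto intro!: minus_carrier_mat)

lemma Xcomm_dim [simp]:
  "b \<in> carrier_mat (dimK N) (dimK N) \<Longrightarrow> dim_row (Xcomm N k b) = dimK N"
  "b \<in> carrier_mat (dimK N) (dimK N) \<Longrightarrow> dim_col (Xcomm N k b) = dimK N"
  using carrier_matD[OF Xcomm_carrier] by auto

lemma cD_amp:
  assumes b: "b \<in> carrier_mat (dimK N) (dimK N)"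
  shows "cD N (amp b) = kron2 (Xcomm N 1 b) (sigma 1) + kron2 (Xcomm N 2 b) (sigma 2) + kron2 (Xcomm N 3 b) (sigma 3)"
proof -
  let ?K = "\<lambda>k. kron2 (Xop N k) (sigma k)"
  have K: "?K k \<in> carrier_mat (2 * dimK N) (2 * dimK N)" for k by simp
  have ab: "amp b \<in> carrier_mat (2 * dimK N) (2 * dimK N)" using b by (simp add: amp_def)
  have "DN N * amp b = ?K 1 * amp b + ?K 2 * amp b + ?K 3 * amp b"
    unfolding DN_def using K ab by (metis add_carrier_mat add_mult_distrib_mat)
  moreover have "amp b * DN N = amp b * ?K 1 + amp b * ?K 2 + amp b * ?K 3"
    unfolding DN_def using K ab by (metis add_carrier_mat mult_add_distrib_mat)
  moreover have "?K k * amp b = kron2 (Xop N k * b) (sigma k)" "amp b * ?K k = kron2 (b * Xop N k) (sigma k)" for k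
    unfolding amp_def using b by (simp_all add: kron2_mult[of _ "dimK N"])
  ultimately show ?thesis
    unfolding cD_def by (intro eq_matI) (use b in \<open>auto simp: kron2_index Xcomm_def algebra_simps\<close>)
qed

lemma add3_mult_add3:
  assumes "A1 \<in> carrier_mat n n" "A2 \<in> carrier_mat n n" "A3 \<in> carrier_mat n n"
    "B1 \<in> carrier_mat n n" "B2 \<in> carrier_mat n n" "B3 \<in> carrier_mat n n"
  shows "(A1 + A2 + A3) * (B1 + B2 + B3) =
    A1 * B1 + A1 * B2 + A1 * B3 + (A2 * B1 + A2 * B2 + A2 * B3) + (A3 * B1 + A3 * B2 + A3 * B3)"
proof -
  have "A * (B1 + B2 + B3) = A * B1 + A * B2 + A * B3" if "A \<in> carrier_mat n n" for A
    using that assms by (metis add_carrier_mat mult_add_distrib_mat)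
  moreover have "(A1 + A2 + A3) * (B1 + B2 + B3) = A1 * (B1 + B2 + B3) + A2 * (B1 + B2 + B3) + A3 * (B1 + B2 + B3)"
    using assms by (metis add_carrier_mat add_mult_distrib_mat)
  ultimately show ?thesis using assms by simp
qed

lemma amp_mult_cD_amp_index:
  assumes a: "a \<in> carrier_mat (dimK N) (dimK N)" and b: "b \<in> carrier_mat (dimK N) (dimK N)"
    and I: "I < hdim N" and J: "J < hdim N"
  shows "(amp a * cD N (amp b)) $$ (I,J) =
     (\<Sum>k\<in>{1,2,3}. (a * Xcomm N k b) $$ (I div 2, J div 2) * sigma k $$ (I mod 2, J mod 2))"
proof -
  have aa: "amp a \<in> carrier_mat (2 * dimK N) (2 * dimK N)" using a by (simp add: amp_def)
  have "amp a * cD N (amp b) = amp a * kron2 (Xcomm N 1 b) (sigma 1) + amp a * kron2 (Xcomm N 2 b) (sigma 2)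
      + amp a * kron2 (Xcomm N 3 b) (sigma 3)"
    unfolding cD_amp[OF b] using aa b by (metis add_carrier_mat mult_add_distrib_mat kron2_carrier Xcomm_carrier)
  also have "\<dots> = kron2 (a * Xcomm N 1 b) (sigma 1) + kron2 (a * Xcomm N 2 b) (sigma 2) + kron2 (a * Xcomm N 3 b) (sigma 3)"
    unfolding amp_def using a b by (simp add: kron2_mult[of _ "dimK N"])
  finally show ?thesis using I J a b by (simp add: kron2_index hdim_def)
qed

lemma cD_amp_mult_cD_amp_index:
  assumes a: "a \<in> carrier_mat (dimK N) (dimK N)" and b: "b \<in> carrier_mat (dimK N) (dimK N)"
    and I: "I < hdim N" and J: "J < hdim N"
  shows "(cD N (amp a) * cD N (amp b)) $$ (I,J) =
     (\<Sum>k\<in>{1,2,3}. \<Sum>m\<in>{1,2,3}. (Xcomm N k a * Xcomm N m b) $$ (I div 2, J div 2) * (sigma k * sigma m) $$ (I mod 2, J mod 2))"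
proof -
  have "cD N (amp a) * cD N (amp b) =
     kron2 (Xcomm N 1 a * Xcomm N 1 b) (sigma 1 * sigma 1) + kron2 (Xcomm N 1 a * Xcomm N 2 b) (sigma 1 * sigma 2)
   + kron2 (Xcomm N 1 a * Xcomm N 3 b) (sigma 1 * sigma 3)
   + (kron2 (Xcomm N 2 a * Xcomm N 1 b) (sigma 2 * sigma 1) + kron2 (Xcomm N 2 a * Xcomm N 2 b) (sigma 2 * sigma 2)
   + kron2 (Xcomm N 2 a * Xcomm N 3 b) (sigma 2 * sigma 3))
   + (kron2 (Xcomm N 3 a * Xcomm N 1 b) (sigma 3 * sigma 1) + kron2 (Xcomm N 3 a * Xcomm N 2 b) (sigma 3 * sigma 2)
   + kron2 (Xcomm N 3 a * Xcomm N 3 b) (sigma 3 * sigma 3))"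
    unfolding cD_amp[OF a] cD_amp[OF b]
    by (subst add3_mult_add3[of _ "2 * dimK N"]) (use a b in \<open>simp_all add: kron2_mult[of _ "dimK N"]\<close>)
  then show ?thesis
    using I J a b by (simp add: kron2_index hdim_def index_mult_mat(2,3) del: index_mult_mat(1))
qed

section \<open>Universal forms and the junk \<open>J\<^sup>2\<close>\<close>

definition one_form :: "nat \<Rightarrow> (complex mat \<times> complex mat) list \<Rightarrow> complex mat" where
  "one_form N ps = msum (hdim N) (map (\<lambda>(a,b). amp a * cD N (amp b)) ps)"

definition two_form :: "nat \<Rightarrow> (complex mat \<times> complex mat) list \<Rightarrow> complex mat" where
  "two_form N ps = msum (hdim N) (map (\<lambda>(a,b). cD N (amp a) * cD N (amp b)) ps)"

definition scale_pairs :: "complex \<Rightarrow> (complex mat \<times> complex mat) list \<Rightarrow> (complex mat \<times> complex mat) list" where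
  "scale_pairs c ps = map (\<lambda>(a,b). (c \<cdot>\<^sub>m a, b)) ps"

lemma one_mat_AN [simp]: "1\<^sub>m (dimK N) \<in> AN N"
  by (simp add: AN_def)

lemma scale_pairs_AN: "set ps \<subseteq> AN N \<times> AN N \<Longrightarrow> set (scale_pairs c ps) \<subseteq> AN N \<times> AN N"
  unfolding scale_pairs_def AN_def by auto

lemma one_form_terms_carrier:
  "set ps \<subseteq> AN N \<times> AN N \<Longrightarrow>
   set (map (\<lambda>(a,b). amp a * cD N (amp b)) ps) \<subseteq> carrier_mat (hdim N) (hdim N)"
  unfolding AN_def by (auto intro!: mult_carrier_mat[of _ _ "hdim N"])

lemma two_form_terms_carrier:
  "set ps \<subseteq> AN N \<times> AN N \<Longrightarrow>
   set (map (\<lambda>(a,b). cD N (amp a) * cD N (amp b)) ps) \<subseteq> carrier_mat (hdim N) (hdim N)"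
  unfolding AN_def by (auto intro!: mult_carrier_mat[of _ _ "hdim N"])

lemma one_form_dim [simp]: "dim_row (one_form N ps) = hdim N" "dim_col (one_form N ps) = hdim N"
  unfolding one_form_def by simp_all

lemma two_form_dim [simp]: "dim_row (two_form N ps) = hdim N" "dim_col (two_form N ps) = hdim N"
  unfolding two_form_def by simp_all

lemma one_form_carrier: "set ps \<subseteq> AN N \<times> AN N \<Longrightarrow> one_form N ps \<in> carrier_mat (hdim N) (hdim N)"
  unfolding one_form_def by (intro msum_carrier one_form_terms_carrier)

lemma two_form_carrier: "set ps \<subseteq> AN N \<times> AN N \<Longrightarrow> two_form N ps \<in> carrier_mat (hdim N) (hdim N)"
  unfolding two_form_def by (intro msum_carrier two_form_terms_carrier)

lemma one_form_append:
  "set ps \<subseteq> AN N \<times> AN N \<Longrightarrow> set qs \<subseteq> AN N \<times> AN N \<Longrightarrow>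
   one_form N (ps @ qs) = one_form N ps + one_form N qs"
  unfolding one_form_def map_append by (intro msum_append one_form_terms_carrier)

lemma two_form_append:
  "set ps \<subseteq> AN N \<times> AN N \<Longrightarrow> set qs \<subseteq> AN N \<times> AN N \<Longrightarrow>
   two_form N (ps @ qs) = two_form N ps + two_form N qs"
  unfolding two_form_def map_append by (intro msum_append two_form_terms_carrier)

lemma one_form_scale_pairs:
  assumes ps: "set ps \<subseteq> AN N \<times> AN N"
  shows "one_form N (scale_pairs c ps) = c \<cdot>\<^sub>m one_form N ps"
proof -
  have "map (\<lambda>(a,b). amp a * cD N (amp b)) (scale_pairs c ps)
      = map (\<lambda>x. c \<cdot>\<^sub>m x) (map (\<lambda>(a,b). amp a * cD N (amp b)) ps)"
    unfolding scale_pairs_def using ps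
    by (auto simp: AN_def amp_smult mult_smult_assoc_mat[OF amp_carrier cD_carrier[OF amp_carrier]])
  then show ?thesis unfolding one_form_def using msum_smult[OF one_form_terms_carrier[OF ps]] by simp
qed

lemma two_form_scale_pairs:
  assumes ps: "set ps \<subseteq> AN N \<times> AN N"
  shows "two_form N (scale_pairs c ps) = c \<cdot>\<^sub>m two_form N ps"
proof -
  have "map (\<lambda>(a,b). cD N (amp a) * cD N (amp b)) (scale_pairs c ps)
      = map (\<lambda>x. c \<cdot>\<^sub>m x) (map (\<lambda>(a,b). cD N (amp a) * cD N (amp b)) ps)"
    unfolding scale_pairs_def using ps
    by (auto simp: AN_def amp_smult cD_smult[OF amp_carrier]
        mult_smult_assoc_mat[OF cD_carrier[OF amp_carrier] cD_carrier[OF amp_carrier]])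
  then show ?thesis unfolding two_form_def using msum_smult[OF two_form_terms_carrier[OF ps]] by simp
qed

lemma one_form_index:
  assumes "set ps \<subseteq> AN N \<times> AN N" "I < hdim N" "J < hdim N"
  shows "one_form N ps $$ (I,J) = sum_list (map (\<lambda>(a,b).
     \<Sum>k\<in>{1,2,3}. (a * Xcomm N k b) $$ (I div 2, J div 2) * sigma k $$ (I mod 2, J mod 2)) ps)"
  unfolding one_form_def msum_index[OF one_form_terms_carrier[OF assms(1)] assms(2,3)] map_map
  by (intro arg_cong[where f = sum_list] map_cong refl)
    (use assms in \<open>auto simp: AN_def amp_mult_cD_amp_index\<close>)

lemma two_form_index:
  assumes "set ps \<subseteq> AN N \<times> AN N" "I < hdim N" "J < hdim N"
  shows "two_form N ps $$ (I,J) = sum_list (map (\<lambda>(a,b).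
     \<Sum>k\<in>{1,2,3}. \<Sum>m\<in>{1,2,3}. (Xcomm N k a * Xcomm N m b) $$ (I div 2, J div 2)
       * (sigma k * sigma m) $$ (I mod 2, J mod 2)) ps)"
  unfolding two_form_def msum_index[OF two_form_terms_carrier[OF assms(1)] assms(2,3)] map_map
  by (intro arg_cong[where f = sum_list] map_cong refl)
    (use assms in \<open>auto simp: AN_def cD_amp_mult_cD_amp_index\<close>)

lemma one_form_in_Omega1: "set ps \<subseteq> AN N \<times> AN N \<Longrightarrow> one_form N ps \<in> Omega1 N"
  unfolding Omega1_def one_form_def by blast

lemma Omega1_carrier: "x \<in> Omega1 N \<Longrightarrow> x \<in> carrier_mat (hdim N) (hdim N)"
  unfolding Omega1_def using one_form_carrier unfolding one_form_def by blast

lemma Sforms_terms_carrier: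
  "set ts \<subseteq> AN N \<times> AN N \<times> AN N \<Longrightarrow>
   set (map (\<lambda>(a0,a1,a2). amp a0 * cD N (amp a1) * cD N (amp a2)) ts) \<subseteq> carrier_mat (hdim N) (hdim N)"
  unfolding AN_def by (auto intro!: mult_carrier_mat[of _ _ "hdim N"])

lemma Sforms_carrier: "u \<in> Sforms N \<Longrightarrow> u \<in> carrier_mat (hdim N) (hdim N)"
  unfolding Sforms_def using msum_carrier[OF Sforms_terms_carrier] by blast

lemma Sforms_add:
  assumes "u \<in> Sforms N" "v \<in> Sforms N"
  shows "u + v \<in> Sforms N"
proof -
  obtain ts ts' where "set ts \<subseteq> AN N \<times> AN N \<times> AN N" "set ts' \<subseteq> AN N \<times> AN N \<times> AN N"
    and "u = msum (hdim N) (map (\<lambda>(a0,a1,a2). amp a0 * cD N (amp a1) * cD N (amp a2)) ts)"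
    and "v = msum (hdim N) (map (\<lambda>(a0,a1,a2). amp a0 * cD N (amp a1) * cD N (amp a2)) ts')"
    using assms unfolding Sforms_def by blast
  then show ?thesis
    unfolding Sforms_def
    by (intro CollectI exI[of _ "ts @ ts'"]) (simp add: msum_append[OF Sforms_terms_carrier Sforms_terms_carrier])
qed

lemma Sforms_smult:
  assumes "u \<in> Sforms N"
  shows "c \<cdot>\<^sub>m u \<in> Sforms N"
proof -
  let ?f = "\<lambda>(a0,a1,a2). amp a0 * cD N (amp a1) * cD N (amp a2)"
  obtain ts where ts: "set ts \<subseteq> AN N \<times> AN N \<times> AN N" and u: "u = msum (hdim N) (map ?f ts)"
    using assms unfolding Sforms_def by blast
  let ?ts = "map (\<lambda>(a0,a1,a2). (c \<cdot>\<^sub>m a0, a1, a2)) ts"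
  have "amp (c \<cdot>\<^sub>m a0) * cD N (amp a1) * cD N (amp a2) = c \<cdot>\<^sub>m (amp a0 * cD N (amp a1) * cD N (amp a2))"
    if "a0 \<in> AN N" "a1 \<in> AN N" "a2 \<in> AN N" for a0 a1 a2
  proof -
    have A: "amp a0 \<in> carrier_mat (hdim N) (hdim N)" and B: "cD N (amp a1) \<in> carrier_mat (hdim N) (hdim N)"
      and C: "cD N (amp a2) \<in> carrier_mat (hdim N) (hdim N)"
      using that by (simp_all add: AN_def)
    show ?thesis
      unfolding amp_smult mult_smult_assoc_mat[OF A B] mult_smult_assoc_mat[OF mult_carrier_mat[OF A B] C] ..
  qed
  then have map_eq: "map ?f ?ts = map (\<lambda>x. c \<cdot>\<^sub>m x) (map ?f ts)"
    using ts by auto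
  have "c \<cdot>\<^sub>m u = msum (hdim N) (map (\<lambda>x. c \<cdot>\<^sub>m x) (map ?f ts))"
    unfolding u by (rule msum_smult[symmetric, OF Sforms_terms_carrier[OF ts]])
  also have "\<dots> = msum (hdim N) (map ?f ?ts)"
    by (simp only: map_eq)
  finally have cu: "c \<cdot>\<^sub>m u = msum (hdim N) (map ?f ?ts)" .
  have ts': "set ?ts \<subseteq> AN N \<times> AN N \<times> AN N" using ts by (auto simp: AN_def)
  show ?thesis
    unfolding Sforms_def by (intro CollectI exI[of _ ?ts] conjI cu ts')
qed

lemma amp_one: "amp (1\<^sub>m (dimK N)) = 1\<^sub>m (hdim N)"
  unfolding amp_def hdim_def by (rule eq_matI) (auto simp: kron2_index, presburger+)

lemma two_form_in_Sforms:
  assumes ps: "set ps \<subseteq> AN N \<times> AN N"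
  shows "two_form N ps \<in> Sforms N"
proof -
  let ?ts = "map (\<lambda>(a,b). (1\<^sub>m (dimK N), a, b)) ps"
  have "1\<^sub>m (hdim N) * cD N (amp a) = cD N (amp a)" if "a \<in> AN N" for a
    using that unfolding AN_def by (intro left_mult_one_mat[OF cD_carrier[OF amp_carrier]])
  then have "map (\<lambda>(a0,a1,a2). amp a0 * cD N (amp a1) * cD N (amp a2)) ?ts
      = map (\<lambda>(a,b). cD N (amp a) * cD N (amp b)) ps"
    using ps by (auto simp: amp_one)
  then have eq: "two_form N ps = msum (hdim N) (map (\<lambda>(a0,a1,a2). amp a0 * cD N (amp a1) * cD N (amp a2)) ?ts)"
    unfolding two_form_def by (simp only:)
  have ts: "set ?ts \<subseteq> AN N \<times> AN N \<times> AN N" using ps by (auto simp: AN_def)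
  show ?thesis
    unfolding Sforms_def by (intro CollectI exI[of _ ?ts] conjI eq ts)
qed

lemma J2_conv_two_form:
  "J2 N = {two_form N ps | ps. set ps \<subseteq> AN N \<times> AN N \<and> one_form N ps = 0\<^sub>m (hdim N) (hdim N)}"
  unfolding J2_def two_form_def one_form_def by simp

lemma J2_carrier: "x \<in> J2 N \<Longrightarrow> x \<in> carrier_mat (hdim N) (hdim N)"
  unfolding J2_conv_two_form using two_form_carrier by blast

lemma J2_add:
  assumes "x \<in> J2 N" "y \<in> J2 N"
  shows "x + y \<in> J2 N"
proof -
  obtain ps qs where "set ps \<subseteq> AN N \<times> AN N" "set qs \<subseteq> AN N \<times> AN N"
    and "x = two_form N ps" "one_form N ps = 0\<^sub>m (hdim N) (hdim N)"
    and "y = two_form N qs" "one_form N qs = 0\<^sub>m (hdim N) (hdim N)"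
    using assms unfolding J2_conv_two_form by blast
  then show ?thesis
    unfolding J2_conv_two_form
    by (intro CollectI exI[of _ "ps @ qs"]) (simp add: one_form_append two_form_append)
qed

lemma J2_smult:
  assumes "x \<in> J2 N"
  shows "c \<cdot>\<^sub>m x \<in> J2 N"
proof -
  obtain ps where "set ps \<subseteq> AN N \<times> AN N" "x = two_form N ps" "one_form N ps = 0\<^sub>m (hdim N) (hdim N)"
    using assms unfolding J2_conv_two_form by blast
  then show ?thesis
    unfolding J2_conv_two_form
    by (intro CollectI exI[of _ "scale_pairs c ps"])
      (simp add: one_form_scale_pairs two_form_scale_pairs scale_pairs_AN)
qed

lemma om2_eq:
  assumes u: "u \<in> carrier_mat (hdim N) (hdim N)" and v: "v \<in> carrier_mat (hdim N) (hdim N)"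
    and uv: "u - v \<in> J2 N"
  shows "om2 N u = om2 N v"
proof -
  have "v - u = (-1) \<cdot>\<^sub>m (u - v)" using u v by (intro eq_matI) auto
  then have vu: "v - u \<in> J2 N" using J2_smult[OF uv] by simp
  have "w + j = z + ((w - z) + j)"
    if "w \<in> carrier_mat (hdim N) (hdim N)" "z \<in> carrier_mat (hdim N) (hdim N)" "j \<in> J2 N" for w z j
    using that J2_carrier[OF that(3)] by (intro eq_matI) auto
  then show ?thesis unfolding om2_def using u v uv vu J2_add by blast
qed

lemma dform_one_form:
  assumes ps: "set ps \<subseteq> AN N \<times> AN N"
  shows "dform N (one_form N ps) = om2 N (two_form N ps)"
proof -
  txt \<open>\<open>dform\<close> uses some representative \<open>qs\<close> of the same one-form; its two-form differs
    from that of \<open>ps\<close> by the junk coming from \<open>qs - ps\<close>.\<close>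
  let ?P = "\<lambda>qs. set qs \<subseteq> AN N \<times> AN N \<and> one_form N ps = one_form N qs"
  define qs where "qs = (SOME qs. ?P qs)"
  have "?P qs" unfolding qs_def using someI[of ?P ps] ps by blast
  then have qs: "set qs \<subseteq> AN N \<times> AN N" "one_form N qs = one_form N ps" by auto
  have d: "dform N (one_form N ps) = om2 N (two_form N qs)"
    unfolding dform_def qs_def two_form_def one_form_def by simp
  let ?L = "qs @ scale_pairs (-1) ps"
  have L: "set ?L \<subseteq> AN N \<times> AN N" using qs ps scale_pairs_AN by auto
  have "one_form N ?L = one_form N ps + (-1) \<cdot>\<^sub>m one_form N ps"
    using qs by (simp add: one_form_append one_form_scale_pairs ps scale_pairs_AN)
  also have "\<dots> = 0\<^sub>m (hdim N) (hdim N)"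
    using one_form_carrier[OF ps] by (intro eq_matI) auto
  finally have "two_form N ?L \<in> J2 N" unfolding J2_conv_two_form using L by blast
  moreover have "two_form N ?L = two_form N qs - two_form N ps"
    using two_form_carrier[OF qs(1)] two_form_carrier[OF ps]
    by (simp add: two_form_append two_form_scale_pairs qs ps scale_pairs_AN) (intro eq_matI, auto)
  ultimately show ?thesis
    unfolding d by (intro om2_eq two_form_carrier qs ps) simp
qed

section \<open>Explicit universal forms from matrix units\<close>

definition munit :: "nat \<Rightarrow> nat \<Rightarrow> nat \<Rightarrow> complex mat" where
  "munit n r p = mat n n (\<lambda>(i,j). if i = r \<and> j = p then 1 else 0)"

lemma munit_carrier [simp]: "munit n r p \<in> carrier_mat n n"
  by (simp add: munit_def)

lemma munit_dim [simp]: "dim_row (munit n r p) = n" "dim_col (munit n r p) = n"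
  by (simp_all add: munit_def)

lemma mult_munit_index:
  assumes "M \<in> carrier_mat n n" "i < n" "s < n" "r < n"
  shows "(M * munit n r p) $$ (i,s) = (if s = p then M $$ (i,r) else 0)"
  using assms
  by (subst index_mult_mat_sum) (auto simp: munit_def if_distrib[of "\<lambda>x. _ * x"] sum.If_cases)

lemma munit_mult_index:
  assumes "M \<in> carrier_mat n n" "s < n" "j < n" "p < n"
  shows "(munit n r p * M) $$ (s,j) = (if s = r then M $$ (p,j) else 0)"
  using assms
  by (subst index_mult_mat_sum) (auto simp: munit_def if_distrib[of "\<lambda>x. x * _"] sum.If_cases)

lemma Xcomm_munit_index:
  assumes "s < dimK N" "j < dimK N" "q < dimK N" "r < dimK N"
  shows "Xcomm N m (munit (dimK N) q r) $$ (s,j) =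
    (if j = r then Xop N m $$ (s,q) else 0) - (if s = q then Xop N m $$ (r,j) else 0)"
  using assms unfolding Xcomm_def by (simp add: mult_munit_index munit_mult_index del: index_mult_mat(1))

lemma Xcomm_mult_munit_index:
  assumes a: "a \<in> carrier_mat (dimK N) (dimK N)" and "i < dimK N" "s < dimK N" "r < dimK N" "p < dimK N"
  shows "Xcomm N k (a * munit (dimK N) r p) $$ (i,s) =
    (if s = p then (Xop N k * a) $$ (i,r) else 0) - a $$ (i,r) * Xop N k $$ (p,s)"
proof -
  let ?X = "Xop N k" and ?E = "munit (dimK N) r p" and ?d = "dimK N"
  have "?X * (a * ?E) = ?X * a * ?E"
    using a by (simp add: assoc_mult_mat[of _ ?d ?d _ ?d _ ?d])
  then have left: "(?X * (a * ?E)) $$ (i,s) = (if s = p then (?X * a) $$ (i,r) else 0)"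
    using assms mult_munit_index[OF mult_carrier_mat[OF Xop_carrier a]] by simp
  have "((a * ?E) * ?X) $$ (i,s) = (\<Sum>t<?d. (a * ?E) $$ (i,t) * ?X $$ (t,s))"
    using assms by (subst index_mult_mat_sum) auto
  also have "\<dots> = (\<Sum>t<?d. if t = p then a $$ (i,r) * ?X $$ (p,s) else 0)"
    using assms by (intro sum.cong refl) (simp add: mult_munit_index del: index_mult_mat(1))
  finally have right: "((a * ?E) * ?X) $$ (i,s) = a $$ (i,r) * ?X $$ (p,s)"
    using assms by simp
  show ?thesis
    unfolding Xcomm_def using assms left right by simp
qed

lemma sum_mult_munit_Xcomm_munit:
  assumes a: "a \<in> carrier_mat (dimK N) (dimK N)" and "i < dimK N" "j < dimK N" "p < dimK N" "q < dimK N"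
  shows "(\<Sum>r<dimK N. ((a * munit (dimK N) r p) * Xcomm N k (munit (dimK N) q r)) $$ (i,j)) =
    a $$ (i,j) * Xop N k $$ (p,q) - (if p = q then (a * Xop N k) $$ (i,j) else 0)"
proof -
  let ?d = "dimK N"
  have pair: "((a * munit ?d r p) * Xcomm N k (munit ?d q r)) $$ (i,j) =
      (if j = r then a $$ (i,r) * Xop N k $$ (p,q) else 0) - (if p = q then a $$ (i,r) * Xop N k $$ (r,j) else 0)"
    if r: "r < ?d" for r
  proof -
    have "((a * munit ?d r p) * Xcomm N k (munit ?d q r)) $$ (i,j)
        = (\<Sum>s<?d. (a * munit ?d r p) $$ (i,s) * Xcomm N k (munit ?d q r) $$ (s,j))"
      using assms r by (subst index_mult_mat_sum) auto
    also have "\<dots> = (\<Sum>s<?d. if s = p then a $$ (i,r) * Xcomm N k (munit ?d q r) $$ (p,j) else 0)"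
      using assms r by (intro sum.cong refl) (simp add: mult_munit_index del: index_mult_mat(1))
    also have "\<dots> = a $$ (i,r) * Xcomm N k (munit ?d q r) $$ (p,j)"
      using assms by simp
    finally have eq: "((a * munit ?d r p) * Xcomm N k (munit ?d q r)) $$ (i,j) = a $$ (i,r) * Xcomm N k (munit ?d q r) $$ (p,j)" .
    show ?thesis unfolding eq using assms r by (simp add: Xcomm_munit_index algebra_simps)
  qed
  have "(\<Sum>r<?d. ((a * munit ?d r p) * Xcomm N k (munit ?d q r)) $$ (i,j)) =
      (\<Sum>r<?d. (if j = r then a $$ (i,r) * Xop N k $$ (p,q) else 0) - (if p = q then a $$ (i,r) * Xop N k $$ (r,j) else 0))"
    by (intro sum.cong refl) (simp add: pair)
  also have "\<dots> = a $$ (i,j) * Xop N k $$ (p,q) - (if p = q then (\<Sum>r<?d. a $$ (i,r) * Xop N k $$ (r,j)) else 0)"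
    using assms by (simp add: sum_subtractf)
  also have "\<dots> = a $$ (i,j) * Xop N k $$ (p,q) - (if p = q then (a * Xop N k) $$ (i,j) else 0)"
    using assms by (simp add: index_mult_mat_sum del: index_mult_mat(1))
  finally show ?thesis .
qed

lemma sum_Xcomm_mult_munit_Xcomm_munit:
  assumes a: "a \<in> carrier_mat (dimK N) (dimK N)" and "i < dimK N" "j < dimK N" "p < dimK N" "q < dimK N"
  shows "(\<Sum>r<dimK N. (Xcomm N k (a * munit (dimK N) r p) * Xcomm N m (munit (dimK N) q r)) $$ (i,j)) =
    (Xop N k * a) $$ (i,j) * Xop N m $$ (p,q) - (if p = q then (Xop N k * a * Xop N m) $$ (i,j) else 0)
    - a $$ (i,j) * (Xop N k * Xop N m) $$ (p,q) + Xop N k $$ (p,q) * (a * Xop N m) $$ (i,j)"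
proof -
  let ?d = "dimK N" and ?X = "Xop N k" and ?Y = "Xop N m"
  have Xa: "?X * a \<in> carrier_mat ?d ?d" by (rule mult_carrier_mat[OF Xop_carrier a])
  have pair: "(Xcomm N k (a * munit ?d r p) * Xcomm N m (munit ?d q r)) $$ (i,j) =
      (if j = r then (?X * a) $$ (i,r) * ?Y $$ (p,q) - a $$ (i,r) * (?X * ?Y) $$ (p,q) else 0)
      - (if p = q then (?X * a) $$ (i,r) * ?Y $$ (r,j) else 0) + ?X $$ (p,q) * (a $$ (i,r) * ?Y $$ (r,j))"
    if r: "r < ?d" for r
  proof -
    let ?W = "\<lambda>s. Xcomm N m (munit ?d q r) $$ (s,j)"
    have "(\<Sum>s<?d. ?X $$ (p,s) * ?W s) = (\<Sum>s<?d.
        (if j = r then ?X $$ (p,s) * ?Y $$ (s,q) else 0) - (if s = q then ?X $$ (p,q) * ?Y $$ (r,j) else 0))"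
      using assms r by (intro sum.cong refl) (simp add: Xcomm_munit_index algebra_simps)
    also have "\<dots> = (if j = r then (?X * ?Y) $$ (p,q) else 0) - ?X $$ (p,q) * ?Y $$ (r,j)"
      using assms by (simp add: sum_subtractf index_mult_mat_sum del: index_mult_mat(1))
    finally have inner: "(\<Sum>s<?d. ?X $$ (p,s) * ?W s) =
        (if j = r then (?X * ?Y) $$ (p,q) else 0) - ?X $$ (p,q) * ?Y $$ (r,j)" .
    have "(Xcomm N k (a * munit ?d r p) * Xcomm N m (munit ?d q r)) $$ (i,j)
        = (\<Sum>s<?d. Xcomm N k (a * munit ?d r p) $$ (i,s) * ?W s)"
      using assms r by (subst index_mult_mat_sum) auto
    also have "\<dots> = (\<Sum>s<?d. (if s = p then (?X * a) $$ (i,r) * ?W p else 0) - a $$ (i,r) * (?X $$ (p,s) * ?W s))"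
      using assms r by (intro sum.cong refl) (simp add: Xcomm_mult_munit_index algebra_simps)
    also have "\<dots> = (?X * a) $$ (i,r) * ?W p - a $$ (i,r) * (\<Sum>s<?d. ?X $$ (p,s) * ?W s)"
      using assms by (simp add: sum_subtractf sum_distrib_left)
    finally have eq: "(Xcomm N k (a * munit ?d r p) * Xcomm N m (munit ?d q r)) $$ (i,j)
        = (?X * a) $$ (i,r) * ?W p - a $$ (i,r) * (\<Sum>s<?d. ?X $$ (p,s) * ?W s)" .
    show ?thesis
      unfolding eq inner using assms r by (simp add: Xcomm_munit_index algebra_simps del: index_mult_mat(1))
  qed
  have "(\<Sum>r<?d. (Xcomm N k (a * munit ?d r p) * Xcomm N m (munit ?d q r)) $$ (i,j)) =
     (\<Sum>r<?d. (if j = r then (?X * a) $$ (i,r) * ?Y $$ (p,q) - a $$ (i,r) * (?X * ?Y) $$ (p,q) else 0)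
        - (if p = q then (?X * a) $$ (i,r) * ?Y $$ (r,j) else 0) + ?X $$ (p,q) * (a $$ (i,r) * ?Y $$ (r,j)))"
    by (intro sum.cong refl) (simp add: pair)
  also have "\<dots> = (?X * a) $$ (i,j) * ?Y $$ (p,q) - a $$ (i,j) * (?X * ?Y) $$ (p,q)
      - (if p = q then (\<Sum>r<?d. (?X * a) $$ (i,r) * ?Y $$ (r,j)) else 0)
      + ?X $$ (p,q) * (\<Sum>r<?d. a $$ (i,r) * ?Y $$ (r,j))"
    using assms by (simp add: sum_distrib_left[symmetric] sum_subtractf sum.distrib)
  also have "\<dots> = (?X * a) $$ (i,j) * ?Y $$ (p,q) - (if p = q then (?X * a * ?Y) $$ (i,j) else 0)
      - a $$ (i,j) * (?X * ?Y) $$ (p,q) + ?X $$ (p,q) * (a * ?Y) $$ (i,j)"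
    using assms Xa by (simp add: index_mult_mat_sum algebra_simps del: index_mult_mat(1))
  finally show ?thesis .
qed

text \<open>The pairs \<open>(a E\<^sub>r\<^sub>p, E\<^sub>q\<^sub>r)\<close>, \<open>r < dim K\<^sub>N\<close>: since \<open>\<Sum>\<^sub>r E\<^sub>r\<^sub>p M E\<^sub>q\<^sub>r = M\<^sub>p\<^sub>q 1\<close>,
  they turn the commutators with \<open>X\<^sub>k\<close> into combinations of \<open>a\<close>, \<open>X\<^sub>k a\<close>, \<open>a X\<^sub>k\<close>, \<open>X\<^sub>k a X\<^sub>m\<close>.\<close>

definition entry_pairs :: "nat \<Rightarrow> complex mat \<Rightarrow> nat \<Rightarrow> nat \<Rightarrow> (complex mat \<times> complex mat) list" where
  "entry_pairs N a p q = map (\<lambda>r. (a * munit (dimK N) r p, munit (dimK N) q r)) [0..<dimK N]"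

lemma entry_pairs_AN: "a \<in> AN N \<Longrightarrow> set (entry_pairs N a p q) \<subseteq> AN N \<times> AN N"
  unfolding entry_pairs_def AN_def by auto

lemma sum_swap3: "(\<Sum>r\<in>A. \<Sum>k\<in>B. \<Sum>m\<in>C. f r k m) = (\<Sum>k\<in>B. \<Sum>m\<in>C. \<Sum>r\<in>A. f r k m)"
proof -
  have "(\<Sum>r\<in>A. \<Sum>k\<in>B. \<Sum>m\<in>C. f r k m) = (\<Sum>k\<in>B. \<Sum>r\<in>A. \<Sum>m\<in>C. f r k m)"
    by (rule sum.swap)
  also have "\<dots> = (\<Sum>k\<in>B. \<Sum>m\<in>C. \<Sum>r\<in>A. f r k m)"
    by (intro sum.cong refl sum.swap)
  finally show ?thesis .
qed

lemma sum_list_upt_conv_sum: "sum_list (map f [0..<n]) = (\<Sum>r<n. f r)"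
  by (simp add: interv_sum_list_conv_sum_set_nat atLeast0LessThan)

lemma one_form_entry_pairs_index:
  assumes a: "a \<in> AN N" and IJ: "I < hdim N" "J < hdim N" and pq: "p < dimK N" "q < dimK N"
  shows "one_form N (entry_pairs N a p q) $$ (I,J) = (\<Sum>k\<in>{1,2,3}.
     (a $$ (I div 2, J div 2) * Xop N k $$ (p,q) - (if p = q then (a * Xop N k) $$ (I div 2, J div 2) else 0))
     * sigma k $$ (I mod 2, J mod 2))"
proof -
  let ?d = "dimK N"
  have a': "a \<in> carrier_mat ?d ?d" using a by (simp add: AN_def)
  have ij: "I div 2 < ?d" "J div 2 < ?d" using IJ by (auto simp: hdim_def)
  have "one_form N (entry_pairs N a p q) $$ (I,J) = (\<Sum>k\<in>{1,2,3}.
      (\<Sum>r<?d. ((a * munit ?d r p) * Xcomm N k (munit ?d q r)) $$ (I div 2, J div 2)) * sigma k $$ (I mod 2, J mod 2))"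
    unfolding one_form_index[OF entry_pairs_AN[OF a] IJ]
    unfolding entry_pairs_def map_map o_def prod.case sum_list_upt_conv_sum
    by (subst sum.swap) (simp add: sum_distrib_right)
  then show ?thesis
    by (simp add: sum_mult_munit_Xcomm_munit[OF a' ij pq])
qed

lemma two_form_entry_pairs_index:
  assumes a: "a \<in> AN N" and IJ: "I < hdim N" "J < hdim N" and pq: "p < dimK N" "q < dimK N"
  shows "two_form N (entry_pairs N a p q) $$ (I,J) = (\<Sum>k\<in>{1,2,3}. \<Sum>m\<in>{1,2,3}.
     ((Xop N k * a) $$ (I div 2, J div 2) * Xop N m $$ (p,q)
      - (if p = q then (Xop N k * a * Xop N m) $$ (I div 2, J div 2) else 0)
      - a $$ (I div 2, J div 2) * (Xop N k * Xop N m) $$ (p,q)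
      + Xop N k $$ (p,q) * (a * Xop N m) $$ (I div 2, J div 2))
     * (sigma k * sigma m) $$ (I mod 2, J mod 2))"
proof -
  let ?d = "dimK N"
  have a': "a \<in> carrier_mat ?d ?d" using a by (simp add: AN_def)
  have ij: "I div 2 < ?d" "J div 2 < ?d" using IJ by (auto simp: hdim_def)
  have "two_form N (entry_pairs N a p q) $$ (I,J) = (\<Sum>k\<in>{1,2,3}. \<Sum>m\<in>{1,2,3}.
      (\<Sum>r<?d. (Xcomm N k (a * munit ?d r p) * Xcomm N m (munit ?d q r)) $$ (I div 2, J div 2))
      * (sigma k * sigma m) $$ (I mod 2, J mod 2))"
    unfolding two_form_index[OF entry_pairs_AN[OF a] IJ]
    unfolding entry_pairs_def map_map o_def prod.case sum_list_upt_conv_sum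
    by (subst sum_swap3) (simp only: sum_distrib_right)
  then show ?thesis
    by (simp only: sum_Xcomm_mult_munit_Xcomm_munit[OF a' ij pq])
qed

definition entry_combo :: "nat \<Rightarrow> complex mat \<Rightarrow> (complex \<times> nat \<times> nat) list \<Rightarrow> (complex mat \<times> complex mat) list" where
  "entry_combo N a ts = concat (map (\<lambda>(c,p,q). scale_pairs c (entry_pairs N a p q)) ts)"

lemma entry_combo_AN: "a \<in> AN N \<Longrightarrow> set (entry_combo N a ts) \<subseteq> AN N \<times> AN N"
  unfolding entry_combo_def using entry_pairs_AN scale_pairs_AN by fastforce

lemma entry_combo_Cons:
  "entry_combo N a ((c,p,q) # ts) = scale_pairs c (entry_pairs N a p q) @ entry_combo N a ts"
  by (simp add: entry_combo_def)

lemma one_form_entry_combo_index: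
  assumes a: "a \<in> AN N" and IJ: "I < hdim N" "J < hdim N"
  shows "one_form N (entry_combo N a ts) $$ (I,J) =
    sum_list (map (\<lambda>(c,p,q). c * one_form N (entry_pairs N a p q) $$ (I,J)) ts)"
proof (induction ts)
  case Nil
  then show ?case using IJ by (simp add: entry_combo_def one_form_def msum_def)
next
  case (Cons t ts)
  then show ?case
    using IJ scale_pairs_AN[OF entry_pairs_AN[OF a]] entry_combo_AN[OF a]
    by (cases t) (simp add: entry_combo_Cons one_form_append one_form_scale_pairs entry_pairs_AN[OF a])
qed

lemma two_form_entry_combo_index:
  assumes a: "a \<in> AN N" and IJ: "I < hdim N" "J < hdim N"
  shows "two_form N (entry_combo N a ts) $$ (I,J) =
    sum_list (map (\<lambda>(c,p,q). c * two_form N (entry_pairs N a p q) $$ (I,J)) ts)"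
proof (induction ts)
  case Nil
  then show ?case using IJ by (simp add: entry_combo_def two_form_def msum_def)
next
  case (Cons t ts)
  then show ?case
    using IJ scale_pairs_AN[OF entry_pairs_AN[OF a]] entry_combo_AN[OF a]
    by (cases t) (simp add: entry_combo_Cons two_form_append two_form_scale_pairs entry_pairs_AN[OF a])
qed

lemma dimK_ge_3: "N \<ge> 1 \<Longrightarrow> dimK N \<ge> 3"
proof -
  assume "N \<ge> 1"
  then have "(\<Sum>n\<le>1. n + 1) \<le> (\<Sum>n\<le>N. n + (1::nat))" by (intro sum_mono2) auto
  then show ?thesis unfolding dimK_def by (simp add: numeral_3_eq_3)
qed

text \<open>Indices \<open>1, 2\<close> of \<open>K\<^sub>N\<close> carry the summand \<open>\<rho>\<^sub>1\<^sub>/\<^sub>2\<close>, on which \<open>X\<^sub>k = -\<sigma>\<^sub>k/2\<close>;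
  index \<open>0\<close> carries the trivial summand.\<close>

definition corner_X :: "nat \<Rightarrow> nat \<Rightarrow> nat \<Rightarrow> complex" where
  "corner_X k p r = (if p \<in> {1,2} \<and> r \<in> {1,2} then - pauli k (p - 1) (r - 1) / 2 else 0)"

lemma diag_block_mat_Cons_index:
  assumes "i < dim_row A + dim_row (diag_block_mat As)" "j < dim_col A + dim_col (diag_block_mat As)"
  shows "diag_block_mat (A # As) $$ (i,j) =
    (if i < dim_row A then if j < dim_col A then A $$ (i,j) else 0
     else if j < dim_col A then 0 else diag_block_mat As $$ (i - dim_row A, j - dim_col A))"
  using assms by (simp add: Let_def)

lemma Xop_corner:
  assumes N: "N \<ge> 1" and p: "p < 3" and r: "r < dimK N"
  shows "Xop N k $$ (p,r) = corner_X k p r"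
proof -
  let ?Rs = "map (\<lambda>n. rho n k) [2..<Suc N]"
  let ?D = "diag_block_mat (rho 1 k # ?Rs)"
  have rho_dim [simp]: "dim_row (rho n k) = n + 1" "dim_col (rho n k) = n + 1" for n
    by (simp_all add: rho_def)
  have "[0..<Suc N] = 0 # 1 # [2..<Suc N]"
    using N by (simp add: upt_conv_Cons numeral_2_eq_2 del: upt_Suc)
  then have X: "Xop N k = diag_block_mat (rho 0 k # rho 1 k # ?Rs)"
    unfolding Xop_def by (simp del: upt_Suc)
  have D_dim: "dim_row ?D = 2 + dim_row (diag_block_mat ?Rs)" "dim_col ?D = 2 + dim_col (diag_block_mat ?Rs)"
    by (simp_all add: Let_def del: upt_Suc)
  have X_dim: "dimK N = 1 + dim_row ?D" "dimK N = 1 + dim_col ?D"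
    using Xop_dim[of N k] unfolding X by (simp_all add: Let_def del: upt_Suc)
  have rho_0: "rho 0 k $$ (0,0) = 0"
    by (simp add: rho_def)
  have outer_bounds: "p < dim_row (rho 0 k) + dim_row ?D" "r < dim_col (rho 0 k) + dim_col ?D"
    using p r X_dim D_dim by simp_all
  have outer: "Xop N k $$ (p,r) = (if p = 0 \<or> r = 0 then 0 else ?D $$ (p - 1, r - 1))"
    unfolding X diag_block_mat_Cons_index[OF outer_bounds]
    by (auto simp: rho_0 simp del: upt_Suc diag_block_mat.simps)
  have inner: "?D $$ (p - 1, r - 1) = (if r - 1 < 2 then rho 1 k $$ (p - 1, r - 1) else 0)"
    if "p \<noteq> 0" "r \<noteq> 0"
  proof -
    have "p - 1 < dim_row (rho 1 k) + dim_row (diag_block_mat ?Rs)"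
      "r - 1 < dim_col (rho 1 k) + dim_col (diag_block_mat ?Rs)"
      using that p r X_dim D_dim by auto
    then show ?thesis
      using p by (simp add: diag_block_mat_Cons_index del: upt_Suc diag_block_mat.simps)
  qed
  have rho_1: "a < 2 \<Longrightarrow> b < 2 \<Longrightarrow> rho 1 k $$ (a,b) = corner_X k (a + 1) (b + 1)" for a b
    by (auto simp: less_2_cases_iff rho_def corner_X_def pauli_def spin_c_def)
  show ?thesis
  proof (cases "p = 0 \<or> r = 0 \<or> r \<ge> 3")
    case True
    then show ?thesis using outer inner p by (auto simp: corner_X_def)
  next
    case False
    then have "p - 1 < 2" "r - 1 < 2" "p - 1 + 1 = p" "r - 1 + 1 = r" using p by auto
    then show ?thesis using outer inner False rho_1[of "p - 1" "r - 1"] by simp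
  qed
qed

lemma Xop_mult_corner:
  assumes N: "N \<ge> 1" and p: "p < 3" and q: "q < 3"
  shows "(Xop N k * Xop N m) $$ (p,q) = (\<Sum>s<3. corner_X k p s * corner_X m s q)"
proof -
  have d: "3 \<le> dimK N" using dimK_ge_3[OF N] .
  have "(Xop N k * Xop N m) $$ (p,q) = (\<Sum>s<dimK N. Xop N k $$ (p,s) * Xop N m $$ (s,q))"
    using p q d by (subst index_mult_mat_sum) auto
  also have "\<dots> = (\<Sum>s<dimK N. corner_X k p s * corner_X m s q)"
  proof (rule sum.cong)
    fix s assume "s \<in> {..<dimK N}"
    then show "Xop N k $$ (p,s) * Xop N m $$ (s,q) = corner_X k p s * corner_X m s q"
      using p q d by (cases "s < 3") (simp_all add: Xop_corner[OF N] corner_X_def)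
  qed simp
  also have "\<dots> = (\<Sum>s<3. corner_X k p s * corner_X m s q)"
    using d by (intro sum.mono_neutral_right) (auto simp: corner_X_def)
  finally show ?thesis .
qed

text \<open>Since \<open>X\<^sub>k = -\<sigma>\<^sub>k/2\<close> on the spin-1/2 block, the weights below satisfy
  \<open>\<Sum> c (X\<^sub>k)\<^sub>p\<^sub>q = \<delta>\<^sub>k\<^sub>l\<close>, and the weights of diagonal entries sum to zero.\<close>

definition eb_rep :: "nat \<Rightarrow> (complex \<times> nat \<times> nat) list" where
  "eb_rep l = (if l = 1 then [(\<i>,1,2),(\<i>,2,1)] else if l = 2 then [(-1,1,2),(1,2,1)] else [(\<i>,1,1),(-\<i>,2,2)])"

lemma one_form_eb_rep:
  assumes N: "N \<ge> 1" and l: "l \<in> {1,2,3}"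
  shows "one_form N (entry_combo N (1\<^sub>m (dimK N)) (eb_rep l)) = eb N l"
proof (rule eq_matI)
  fix I J assume "I < dim_row (eb N l)" "J < dim_col (eb N l)"
  then have IJ: "I < hdim N" "J < hdim N" by simp_all
  have ij: "I div 2 < dimK N" "J div 2 < dimK N" using IJ by (auto simp: hdim_def)
  show "one_form N (entry_combo N (1\<^sub>m (dimK N)) (eb_rep l)) $$ (I,J) = eb N l $$ (I,J)"
    unfolding one_form_entry_combo_index[OF one_mat_AN IJ] eb_index[OF IJ]
    using l mod_2_cases[of I] mod_2_cases[of J] dimK_ge_3[OF N] ij
    by (auto simp: eb_rep_def one_form_entry_pairs_index[OF one_mat_AN IJ] Xop_corner[OF N] corner_X_def
        sigma_index pauli_def algebra_simps)
qed simp_all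

lemma two_form_eb_rep:
  assumes N: "N \<ge> 1" and l: "l \<in> {1,2,3}"
  shows "two_form N (entry_combo N (1\<^sub>m (dimK N)) (eb_rep l)) = eb N l + amp ((-2) \<cdot>\<^sub>m Xop N l)"
proof (rule eq_matI)
  fix I J assume "I < dim_row (eb N l + amp ((-2) \<cdot>\<^sub>m Xop N l))" "J < dim_col (eb N l + amp ((-2) \<cdot>\<^sub>m Xop N l))"
  then have IJ: "I < hdim N" "J < hdim N" by (simp_all add: hdim_def)
  have ij: "I div 2 < dimK N" "J div 2 < dimK N" using IJ by (auto simp: hdim_def)
  have rhs: "(eb N l + amp ((-2) \<cdot>\<^sub>m Xop N l)) $$ (I,J) =
     (if I div 2 = J div 2 then pauli l (I mod 2) (J mod 2) else 0)
     + (if I mod 2 = J mod 2 then -2 * Xop N l $$ (I div 2, J div 2) else 0)"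
    using IJ ij by (simp add: eb_index amp_index[where N = N])
  show "two_form N (entry_combo N (1\<^sub>m (dimK N)) (eb_rep l)) $$ (I,J) = (eb N l + amp ((-2) \<cdot>\<^sub>m Xop N l)) $$ (I,J)"
    unfolding two_form_entry_combo_index[OF one_mat_AN IJ] rhs
    using l mod_2_cases[of I] mod_2_cases[of J] dimK_ge_3[OF N] ij
    by (elim disjE insertE emptyE; simp add: eb_rep_def two_form_entry_pairs_index[OF one_mat_AN IJ]
        Xop_corner[OF N] Xop_mult_corner[OF N] corner_X_def sigma_mult_index pauli_def lessThan_nat_numeral
        del: index_mult_mat(1); (intro conjI impI)?; simp add: algebra_simps)
qed (simp_all add: hdim_def)

text \<open>The weights sum to zero and annihilate the diagonal of every \<open>X\<^sub>k\<close>, so the one-form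
  vanishes; since \<open>X\<^sub>k X\<^sub>m\<close> has trace \<open>-\<delta>\<^sub>k\<^sub>m/2\<close> on the spin-1/2 block, the two-form is \<open>a\<close>.\<close>

definition amp_rep :: "(complex \<times> nat \<times> nat) list" where
  "amp_rep = [(4/3,0,0),(-2/3,1,1),(-2/3,2,2)]"

lemma one_form_amp_rep:
  assumes N: "N \<ge> 1" and a: "a \<in> AN N"
  shows "one_form N (entry_combo N a amp_rep) = 0\<^sub>m (hdim N) (hdim N)"
proof (rule eq_matI)
  fix I J assume "I < dim_row (0\<^sub>m (hdim N) (hdim N))" "J < dim_col (0\<^sub>m (hdim N) (hdim N))"
  then have IJ: "I < hdim N" "J < hdim N" by auto
  show "one_form N (entry_combo N a amp_rep) $$ (I,J) = 0\<^sub>m (hdim N) (hdim N) $$ (I,J)"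
    unfolding one_form_entry_combo_index[OF a IJ] using IJ dimK_ge_3[OF N]
    by (simp add: amp_rep_def one_form_entry_pairs_index[OF a IJ] Xop_corner[OF N] corner_X_def
        pauli_def del: index_mult_mat(1); simp add: field_simps)
qed simp_all

lemma two_form_amp_rep:
  assumes N: "N \<ge> 1" and a: "a \<in> AN N"
  shows "two_form N (entry_combo N a amp_rep) = amp a"
proof (rule eq_matI)
  have a': "a \<in> carrier_mat (dimK N) (dimK N)" using a by (simp add: AN_def)
  fix I J assume "I < dim_row (amp a)" "J < dim_col (amp a)"
  then have IJ: "I < hdim N" "J < hdim N" using amp_carrier[OF a'] by auto
  show "two_form N (entry_combo N a amp_rep) $$ (I,J) = amp a $$ (I,J)"
    unfolding two_form_entry_combo_index[OF a IJ] amp_index[OF a' IJ]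
    using mod_2_cases[of I] mod_2_cases[of J] dimK_ge_3[OF N]
    by (elim disjE; simp add: amp_rep_def two_form_entry_pairs_index[OF a IJ] Xop_corner[OF N]
        Xop_mult_corner[OF N] corner_X_def sigma_mult_index pauli_def lessThan_nat_numeral
        del: index_mult_mat(1); simp add: field_simps)
qed (use a in \<open>simp_all add: AN_def hdim_def\<close>)

lemma amp_in_J2:
  assumes N: "N \<ge> 1" and a: "a \<in> AN N"
  shows "amp a \<in> J2 N"
  unfolding J2_conv_two_form
  by (intro CollectI exI[of _ "entry_combo N a amp_rep"] conjI entry_combo_AN[OF a]
      two_form_amp_rep[OF N a, symmetric] one_form_amp_rep[OF N a])

lemma amp_in_Sforms: "N \<ge> 1 \<Longrightarrow> a \<in> AN N \<Longrightarrow> amp a \<in> Sforms N"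
  using two_form_in_Sforms[OF entry_combo_AN, of a N amp_rep] by (simp add: two_form_amp_rep)

lemma eb_in_Omega1: "N \<ge> 1 \<Longrightarrow> l \<in> {1,2,3} \<Longrightarrow> eb N l \<in> Omega1 N"
  using one_form_in_Omega1[OF entry_combo_AN[OF one_mat_AN], of N "eb_rep l"] by (simp add: one_form_eb_rep)

lemma eb_in_Sforms:
  assumes N: "N \<ge> 1" and l: "l \<in> {1,2,3}"
  shows "eb N l \<in> Sforms N"
proof -
  have X: "c \<cdot>\<^sub>m Xop N l \<in> AN N" for c by (simp add: AN_def)
  have "eb N l = (eb N l + amp ((-2) \<cdot>\<^sub>m Xop N l)) + amp (2 \<cdot>\<^sub>m Xop N l)"
    by (rule eq_matI) (auto simp: amp_index[where N = N] hdim_def)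
  moreover have "eb N l + amp ((-2) \<cdot>\<^sub>m Xop N l) \<in> Sforms N"
    using two_form_in_Sforms[OF entry_combo_AN[OF one_mat_AN], of N "eb_rep l"]
    by (simp add: two_form_eb_rep[OF N l])
  ultimately show ?thesis
    using Sforms_add[OF _ amp_in_Sforms[OF N X]] by metis
qed

section \<open>Two-forms of the shape \<open>1 \<otimes> M\<close>\<close>

definition omega_mat :: "nat \<Rightarrow> nat \<Rightarrow> complex mat" where
  "omega_mat k j = mat 2 2 (\<lambda>(a,b). - (\<Sum>l\<in>{1,2,3}. eps k j l * pauli l a b) / 2)"

lemma omega_mat_carrier [simp]: "omega_mat k j \<in> carrier_mat 2 2"
  by (simp add: omega_mat_def)

lemma omega_eq_kron2: "omega N k j = kron2 (1\<^sub>m (dimK N)) (omega_mat k j)"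
proof -
  have c: "set [eps k j l \<cdot>\<^sub>m eb N l. l \<leftarrow> [1,2,3]] \<subseteq> carrier_mat (hdim N) (hdim N)" by auto
  show ?thesis
  proof (rule eq_matI)
    fix I J assume "I < dim_row (kron2 (1\<^sub>m (dimK N)) (omega_mat k j))" "J < dim_col (kron2 (1\<^sub>m (dimK N)) (omega_mat k j))"
    then have IJ: "I < hdim N" "J < hdim N" by (simp_all add: hdim_def)
    show "omega N k j $$ (I,J) = kron2 (1\<^sub>m (dimK N)) (omega_mat k j) $$ (I,J)"
      unfolding omega_def kron2_one_index[OF omega_mat_carrier IJ]
      using IJ msum_carrier[OF c] msum_index[OF c IJ] by (simp add: eb_index omega_mat_def field_simps)
  qed (use msum_carrier[OF c] in \<open>simp_all add: omega_def hdim_def\<close>)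
qed

lemma wedge_omega_omega:
  "wedge N (omega N i k) (omega N k j) = om2 N (kron2 (1\<^sub>m (dimK N)) (omega_mat i k * omega_mat k j))"
  unfolding wedge_def omega_eq_kron2 by (simp add: kron2_one_mult)

lemma wedge_eb_eb: "wedge N (eb N p) (eb N j) = om2 N (kron2 (1\<^sub>m (dimK N)) (sigma p * sigma j))"
  unfolding wedge_def eb_mult_eb ..

lemma fb_eq_kron2:
  assumes q: "q \<in> {1,2,3}"
  shows "fb N q = om2 N (kron2 (1\<^sub>m (dimK N)) ((-1) \<cdot>\<^sub>m sigma q))"
proof -
  let ?xs = "[eps q a b \<cdot>\<^sub>m (eb N a * eb N b). a \<leftarrow> [1,2,3], b \<leftarrow> [1,2,3]]"
  have c: "set ?xs \<subseteq> carrier_mat (hdim N) (hdim N)" by auto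
  have "(1/2) \<cdot>\<^sub>m msum (hdim N) ?xs = kron2 (1\<^sub>m (dimK N)) ((-1) \<cdot>\<^sub>m sigma q)"
  proof (rule eq_matI)
    fix I J assume "I < dim_row (kron2 (1\<^sub>m (dimK N)) ((-1) \<cdot>\<^sub>m sigma q))"
      "J < dim_col (kron2 (1\<^sub>m (dimK N)) ((-1) \<cdot>\<^sub>m sigma q))"
    then have IJ: "I < hdim N" "J < hdim N" by (simp_all add: hdim_def)
    have entry: "(eps q a b \<cdot>\<^sub>m (eb N a * eb N b)) $$ (I,J) =
        eps q a b * (if I div 2 = J div 2 then (sigma a * sigma b) $$ (I mod 2, J mod 2) else 0)" for a b
      using IJ by (simp add: eb_mult_eb kron2_one_index[OF mult_carrier_mat[OF sigma_carrier sigma_carrier] IJ]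
          hdim_def del: index_mult_mat(1))
    have "msum (hdim N) ?xs $$ (I,J) = (if I div 2 = J div 2 then
        sum_list [eps q a b * (sigma a * sigma b) $$ (I mod 2, J mod 2). a \<leftarrow> [1,2,3], b \<leftarrow> [1,2,3]] else 0)"
      unfolding msum_index[OF c IJ] by (simp add: entry del: index_mult_mat(1))
    then show "((1/2) \<cdot>\<^sub>m msum (hdim N) ?xs) $$ (I,J) = kron2 (1\<^sub>m (dimK N)) ((-1) \<cdot>\<^sub>m sigma q) $$ (I,J)"
      unfolding kron2_one_index[OF smult_carrier_mat[OF sigma_carrier] IJ]
      using IJ msum_carrier[OF c] q mod_2_cases[of I] mod_2_cases[of J]
      by (elim disjE insertE emptyE; simp add: sigma_mult_index sigma_index eps_def pauli_def
          del: index_mult_mat(1))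
  qed (use msum_carrier[OF c] in \<open>simp_all add: hdim_def\<close>)
  then show ?thesis unfolding fb_def by simp
qed

definition omega_rep :: "nat \<Rightarrow> nat \<Rightarrow> nat \<Rightarrow> (complex mat \<times> complex mat) list" where
  "omega_rep N k j =
     scale_pairs (- eps k j 1 / 2) (entry_combo N (1\<^sub>m (dimK N)) (eb_rep 1))
     @ scale_pairs (- eps k j 2 / 2) (entry_combo N (1\<^sub>m (dimK N)) (eb_rep 2))
     @ scale_pairs (- eps k j 3 / 2) (entry_combo N (1\<^sub>m (dimK N)) (eb_rep 3))"

lemma dform_omega:
  assumes N: "N \<ge> 1"
  shows "dform N (omega N k j) = om2 N (kron2 (1\<^sub>m (dimK N)) (omega_mat k j))"
proof -
  txt \<open>\<open>\<omega>\<^sub>k\<^sub>j = \<Sum>\<^sub>l (-\<epsilon>\<^sub>k\<^sub>j\<^sub>l/2) e\<^sub>l\<close>, and the two-form of the representative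
    of \<open>e\<^sub>l\<close> is \<open>e\<^sub>l\<close> up to junk, i.e. \<open>d e\<^sub>l = [e\<^sub>l]\<close>.\<close>
  let ?c = "\<lambda>l. - eps k j l / 2"
  let ?B = "eps k j 1 \<cdot>\<^sub>m Xop N 1 + (eps k j 2 \<cdot>\<^sub>m Xop N 2 + eps k j 3 \<cdot>\<^sub>m Xop N 3)"
  have rep: "set (scale_pairs c (entry_combo N (1\<^sub>m (dimK N)) (eb_rep l))) \<subseteq> AN N \<times> AN N" for c l
    using scale_pairs_AN[OF entry_combo_AN[OF one_mat_AN]] .
  then have rep_AN: "set (omega_rep N k j) \<subseteq> AN N \<times> AN N"
    unfolding omega_rep_def by simp
  have "one_form N (omega_rep N k j) = ?c 1 \<cdot>\<^sub>m eb N 1 + (?c 2 \<cdot>\<^sub>m eb N 2 + ?c 3 \<cdot>\<^sub>m eb N 3)"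
    unfolding omega_rep_def using rep
    by (simp add: one_form_append one_form_scale_pairs entry_combo_AN one_form_eb_rep[OF N])
  also have "\<dots> = omega N k j"
    by (rule eq_matI) (simp_all add: omega_eq_kron2 kron2_one_index eb_index omega_mat_def hdim_def field_simps)
  finally have one: "one_form N (omega_rep N k j) = omega N k j" .
  have "two_form N (omega_rep N k j) = ?c 1 \<cdot>\<^sub>m (eb N 1 + amp ((-2) \<cdot>\<^sub>m Xop N 1))
      + (?c 2 \<cdot>\<^sub>m (eb N 2 + amp ((-2) \<cdot>\<^sub>m Xop N 2)) + ?c 3 \<cdot>\<^sub>m (eb N 3 + amp ((-2) \<cdot>\<^sub>m Xop N 3)))"
    unfolding omega_rep_def using rep
    by (simp add: two_form_append two_form_scale_pairs entry_combo_AN two_form_eb_rep[OF N])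
  then have "two_form N (omega_rep N k j) - omega N k j = amp ?B"
    by (intro eq_matI) (auto simp: omega_eq_kron2 kron2_one_index eb_index amp_index[where N = N]
        omega_mat_def hdim_def field_simps)
  then have "om2 N (two_form N (omega_rep N k j)) = om2 N (omega N k j)"
    using amp_in_J2[OF N, of ?B] by (intro om2_eq two_form_carrier[OF rep_AN]) (simp_all add: AN_def omega_eq_kron2)
  then show ?thesis
    using dform_one_form[OF rep_AN] unfolding one omega_eq_kron2 by simp
qed

definition pauli_coord :: "complex mat \<Rightarrow> nat \<Rightarrow> complex" where
  "pauli_coord M q =
     (if q = 1 then - \<i> * (M $$ (0,1) + M $$ (1,0)) / 2
      else if q = 2 then (M $$ (0,1) - M $$ (1,0)) / 2
      else - \<i> * (M $$ (0,0) - M $$ (1,1)) / 2)"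

text \<open>\<open>M = tr M/2 + \<Sum>\<^sub>q pauli_coord M q \<sigma>\<^sub>q\<close>, and the scalar part \<open>1 \<otimes> 1 = amp 1\<close> is junk.\<close>

lemma om2_kron2_one:
  assumes N: "N \<ge> 1" and M: "M \<in> carrier_mat 2 2"
  shows "om2 N (kron2 (1\<^sub>m (dimK N)) M) =
    om2 N (pauli_coord M 1 \<cdot>\<^sub>m eb N 1 + (pauli_coord M 2 \<cdot>\<^sub>m eb N 2 + pauli_coord M 3 \<cdot>\<^sub>m eb N 3))"
proof (rule om2_eq)
  let ?a = "((M $$ (0,0) + M $$ (1,1)) / 2) \<cdot>\<^sub>m 1\<^sub>m (dimK N)"
  have "kron2 (1\<^sub>m (dimK N)) M - (pauli_coord M 1 \<cdot>\<^sub>m eb N 1 + (pauli_coord M 2 \<cdot>\<^sub>m eb N 2 + pauli_coord M 3 \<cdot>\<^sub>m eb N 3))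
      = amp ?a"
  proof (rule eq_matI)
    fix I J assume "I < dim_row (amp ?a)" "J < dim_col (amp ?a)"
    then have IJ: "I < hdim N" "J < hdim N" by (simp_all add: amp_def hdim_def)
    have ij: "I div 2 < dimK N" "J div 2 < dimK N" using IJ by (auto simp: hdim_def)
    show "(kron2 (1\<^sub>m (dimK N)) M - (pauli_coord M 1 \<cdot>\<^sub>m eb N 1 + (pauli_coord M 2 \<cdot>\<^sub>m eb N 2
        + pauli_coord M 3 \<cdot>\<^sub>m eb N 3))) $$ (I,J) = amp ?a $$ (I,J)"
      using IJ ij M mod_2_cases[of I] mod_2_cases[of J]
      by (cases "I div 2 = J div 2"; elim disjE;
          simp add: kron2_one_index eb_index amp_index[where N = N] pauli_coord_def pauli_def field_simps)
  qed (simp_all add: amp_def hdim_def)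
  then show "kron2 (1\<^sub>m (dimK N)) M - (pauli_coord M 1 \<cdot>\<^sub>m eb N 1 + (pauli_coord M 2 \<cdot>\<^sub>m eb N 2
      + pauli_coord M 3 \<cdot>\<^sub>m eb N 3)) \<in> J2 N"
    using amp_in_J2[OF N] by (simp add: AN_def)
qed auto

section \<open>The balanced tensor product\<close>

definition elem :: "complex mat \<Rightarrow> complex mat set \<Rightarrow> complex mat \<times> complex mat set \<Rightarrow> complex" where
  "elem x w = (\<lambda>z. if z = (x,w) then 1 else 0)"

definition tequiv :: "nat \<Rightarrow> (complex mat \<times> complex mat set \<Rightarrow> complex) \<Rightarrow> (complex mat \<times> complex mat set \<Rightarrow> complex) \<Rightarrow> bool" where
  "tequiv N f g \<longleftrightarrow> (\<lambda>z. f z - g z) \<in> tzero N"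

lemma fs_conv_elem: "fs xs = (\<lambda>z. sum_list (map (\<lambda>(c,x,w). c * elem x w z) xs))"
  unfolding fs_def elem_def by (intro ext arg_cong[where f = sum_list] map_cong refl) auto

lemma fs_Cons: "fs ((c,x,w) # xs) = (\<lambda>z. c * elem x w z + fs xs z)"
  unfolding fs_conv_elem by simp

lemma teq_iff_tequiv: "teq N xs ys \<longleftrightarrow> tequiv N (fs xs) (fs ys)"
  unfolding teq_def tequiv_def ..

lemma tequiv_refl: "tequiv N f f"
  unfolding tequiv_def using tzero.tz_zero by simp

lemma tequiv_sym: "tequiv N f g \<Longrightarrow> tequiv N g f"
  unfolding tequiv_def using tzero.tz_smult[of "\<lambda>z. f z - g z" N "-1"] by (simp add: algebra_simps)

lemma tequiv_trans: "tequiv N f g \<Longrightarrow> tequiv N g h \<Longrightarrow> tequiv N f h"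
  unfolding tequiv_def using tzero.tz_add[of "\<lambda>z. f z - g z" N "\<lambda>z. g z - h z"] by (simp add: algebra_simps)

lemma tequiv_add: "tequiv N f1 g1 \<Longrightarrow> tequiv N f2 g2 \<Longrightarrow> tequiv N (\<lambda>z. f1 z + f2 z) (\<lambda>z. g1 z + g2 z)"
  unfolding tequiv_def using tzero.tz_add[of "\<lambda>z. f1 z - g1 z" N "\<lambda>z. f2 z - g2 z"] by (simp add: algebra_simps)

lemma tequiv_smult: "tequiv N f g \<Longrightarrow> tequiv N (\<lambda>z. c * f z) (\<lambda>z. c * g z)"
  unfolding tequiv_def using tzero.tz_smult[of "\<lambda>z. f z - g z" N c] by (simp add: algebra_simps)

lemma tequiv_add_right:
  assumes "x \<in> Omega1 N" "u \<in> Sforms N" "v \<in> Sforms N"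
  shows "tequiv N (elem x (om2 N (u + v))) (\<lambda>z. elem x (om2 N u) z + elem x (om2 N v) z)"
proof -
  have "[(1, x, om2 N (u + v)), (-1, x, om2 N u), (-1, x, om2 N v)] \<in> tgens N"
    unfolding tgens_def using assms by blast
  then show ?thesis
    unfolding tequiv_def using tzero.tz_gen by (fastforce simp: fs_conv_elem algebra_simps)
qed

lemma tequiv_smult_left:
  assumes "x \<in> Omega1 N" "W \<in> Omega2 N"
  shows "tequiv N (elem (c \<cdot>\<^sub>m x) W) (\<lambda>z. c * elem x W z)"
proof -
  have "[(1, c \<cdot>\<^sub>m x, W), (- c, x, W)] \<in> tgens N"
    unfolding tgens_def using assms by blast
  then show ?thesis
    unfolding tequiv_def using tzero.tz_gen by (fastforce simp: fs_conv_elem algebra_simps)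
qed

lemma tequiv_balanced:
  assumes "x \<in> Omega1 N" "a \<in> AN N" "u \<in> Sforms N"
  shows "tequiv N (elem (x * amp a) (om2 N u)) (elem x (om2 N (amp a * u)))"
proof -
  have "[(1, x * amp a, om2 N u), (-1, x, om2 N (amp a * u))] \<in> tgens N"
    unfolding tgens_def using assms by blast
  then show ?thesis
    unfolding tequiv_def using tzero.tz_gen by (fastforce simp: fs_conv_elem algebra_simps)
qed

text \<open>Scalars move across the tensor sign because they are the elements \<open>c 1\<close> of \<open>A\<^sub>N\<close>.\<close>

lemma tequiv_smult_right:
  assumes x: "x \<in> Omega1 N" and u: "u \<in> Sforms N"
  shows "tequiv N (elem x (om2 N (c \<cdot>\<^sub>m u))) (\<lambda>z. c * elem x (om2 N u) z)"
proof -
  let ?a = "c \<cdot>\<^sub>m 1\<^sub>m (dimK N)"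
  have a: "?a \<in> AN N" by (simp add: AN_def)
  have amp_a: "amp ?a = c \<cdot>\<^sub>m 1\<^sub>m (hdim N)"
    unfolding amp_smult amp_one ..
  have xc: "x \<in> carrier_mat (hdim N) (hdim N)" using Omega1_carrier[OF x] .
  have uc: "u \<in> carrier_mat (hdim N) (hdim N)" using Sforms_carrier[OF u] .
  have "x * amp ?a = c \<cdot>\<^sub>m x" "amp ?a * u = c \<cdot>\<^sub>m u"
    unfolding amp_a using mult_smult_distrib[OF xc one_carrier_mat, of c] mult_smult_assoc_mat[OF one_carrier_mat uc, of c] xc uc
    by simp_all
  then have "tequiv N (elem (c \<cdot>\<^sub>m x) (om2 N u)) (elem x (om2 N (c \<cdot>\<^sub>m u)))"
    using tequiv_balanced[OF x a u] by simp
  then show ?thesis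
    using tequiv_smult_left[OF x, of "om2 N u" c] u tequiv_sym tequiv_trans
    unfolding Omega2_def by blast
qed

definition pauli_nf :: "nat \<Rightarrow> complex mat \<Rightarrow> complex mat \<Rightarrow> complex mat \<times> complex mat set \<Rightarrow> complex" where
  "pauli_nf N x M = (\<lambda>z. pauli_coord M 1 * elem x (om2 N (eb N 1)) z
     + (pauli_coord M 2 * elem x (om2 N (eb N 2)) z + pauli_coord M 3 * elem x (om2 N (eb N 3)) z))"

lemma tequiv_elem_kron2:
  assumes N: "N \<ge> 1" and x: "x \<in> Omega1 N" and M: "M \<in> carrier_mat 2 2"
  shows "tequiv N (elem x (om2 N (kron2 (1\<^sub>m (dimK N)) M))) (pauli_nf N x M)"
proof -
  let ?c = "pauli_coord M"
  have S: "?c q \<cdot>\<^sub>m eb N q \<in> Sforms N" if "q \<in> {1,2,3}" for q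
    using Sforms_smult[OF eb_in_Sforms[OF N that]] .
  have S23: "?c 2 \<cdot>\<^sub>m eb N 2 + ?c 3 \<cdot>\<^sub>m eb N 3 \<in> Sforms N"
    using Sforms_add[OF S S] by simp
  have scal: "tequiv N (elem x (om2 N (?c q \<cdot>\<^sub>m eb N q))) (\<lambda>z. ?c q * elem x (om2 N (eb N q)) z)"
    if "q \<in> {1,2,3}" for q
    using tequiv_smult_right[OF x eb_in_Sforms[OF N that]] .
  have "tequiv N (elem x (om2 N (?c 2 \<cdot>\<^sub>m eb N 2 + ?c 3 \<cdot>\<^sub>m eb N 3)))
      (\<lambda>z. ?c 2 * elem x (om2 N (eb N 2)) z + ?c 3 * elem x (om2 N (eb N 3)) z)"
    using tequiv_trans[OF tequiv_add_right[OF x S S] tequiv_add[OF scal scal]] by simp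
  then have "tequiv N (elem x (om2 N (?c 1 \<cdot>\<^sub>m eb N 1 + (?c 2 \<cdot>\<^sub>m eb N 2 + ?c 3 \<cdot>\<^sub>m eb N 3)))) (pauli_nf N x M)"
    unfolding pauli_nf_def using tequiv_trans[OF tequiv_add_right[OF x S S23] tequiv_add[OF scal]] by simp
  then show ?thesis unfolding om2_kron2_one[OF N M] .
qed

definition kron_terms :: "nat \<Rightarrow> (complex \<times> nat \<times> complex mat) list \<Rightarrow> fsum" where
  "kron_terms N ts = map (\<lambda>(c,p,M). (c, eb N p, om2 N (kron2 (1\<^sub>m (dimK N)) M))) ts"

definition kron_nf :: "nat \<Rightarrow> (complex \<times> nat \<times> complex mat) list \<Rightarrow> complex mat \<times> complex mat set \<Rightarrow> complex" where
  "kron_nf N ts = (\<lambda>z. sum_list (map (\<lambda>(c,p,M). c * pauli_nf N (eb N p) M z) ts))"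

lemma tequiv_kron_terms:
  assumes N: "N \<ge> 1" and ts: "\<forall>(c,p,M)\<in>set ts. p \<in> {1,2,3} \<and> M \<in> carrier_mat 2 2"
  shows "tequiv N (fs (kron_terms N ts)) (kron_nf N ts)"
  using ts
proof (induction ts)
  case Nil
  then show ?case by (simp add: kron_terms_def kron_nf_def fs_def tequiv_refl)
next
  case (Cons t ts)
  obtain c p M where t: "t = (c,p,M)" by (cases t)
  then have "tequiv N (\<lambda>z. c * elem (eb N p) (om2 N (kron2 (1\<^sub>m (dimK N)) M)) z) (\<lambda>z. c * pauli_nf N (eb N p) M z)"
    using Cons.prems by (auto intro!: tequiv_smult tequiv_elem_kron2[OF N eb_in_Omega1[OF N]])
  then show ?case
    using tequiv_add Cons unfolding t by (fastforce simp: kron_terms_def kron_nf_def fs_Cons)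
qed

definition curv_nf :: "nat \<Rightarrow> nat \<Rightarrow> complex mat \<times> complex mat set \<Rightarrow> complex" where
  "curv_nf N j = (\<lambda>z. \<Sum>p\<leftarrow>[1,2,3]. \<Sum>q\<leftarrow>[1,2,3]. 1/4 * eps j p q * elem (eb N p) (om2 N (eb N q)) z)"

definition curv_terms :: "nat \<Rightarrow> (complex \<times> nat \<times> complex mat) list" where
  "curv_terms j = [(1, i, omega_mat i k * omega_mat k j). k \<leftarrow> [1,2,3], i \<leftarrow> [1,2,3]]
     @ [(1, k, omega_mat k j). k \<leftarrow> [1,2,3]]"

lemma curv_eq_kron_terms: "N \<ge> 1 \<Longrightarrow> curv N j = kron_terms N (curv_terms j)"
  by (simp add: curv_def idwedge_def nabla_def kron_terms_def curv_terms_def wedge_omega_omega dform_omega)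

lemma omega_mat_index: "a < 2 \<Longrightarrow> b < 2 \<Longrightarrow>
  omega_mat k j $$ (a,b) = - (eps k j 1 * pauli 1 a b + eps k j 2 * pauli 2 a b + eps k j 3 * pauli 3 a b) / 2"
  unfolding omega_mat_def by simp

lemma curv_tequiv_nf:
  assumes N: "N \<ge> 1" and j: "j \<in> {1,2,3}"
  shows "tequiv N (fs (curv N j)) (curv_nf N j)"
proof -
  have ts: "\<forall>(c,p,M)\<in>set (curv_terms j). p \<in> {1,2,3} \<and> M \<in> carrier_mat 2 2"
    by (auto simp: curv_terms_def intro!: mult_carrier_mat[OF omega_mat_carrier omega_mat_carrier])
  have nf: "kron_nf N (curv_terms j) = curv_nf N j"
    using j
    by (elim insertE emptyE; intro ext;
        simp add: kron_nf_def curv_nf_def curv_terms_def pauli_nf_def pauli_coord_def mult_mat2_index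
          omega_mat_index eps_def pauli_def field_simps del: index_mult_mat(1))
  show ?thesis
    using tequiv_kron_terms[OF N ts] unfolding curv_eq_kron_terms[OF N] nf .
qed

lemma fb_sum_tequiv_nf:
  assumes N: "N \<ge> 1" and j: "j \<in> {1,2,3}"
  shows "tequiv N (fs [(- 1 / 4 * eps j p q, eb N p, fb N q). p \<leftarrow> [1,2,3], q \<leftarrow> [1,2,3]]) (curv_nf N j)"
proof -
  let ?ts = "[(- 1 / 4 * eps j p q, p, (-1) \<cdot>\<^sub>m sigma q). p \<leftarrow> [1,2,3], q \<leftarrow> [1,2,3]]"
  have eq: "[(- 1 / 4 * eps j p q, eb N p, fb N q). p \<leftarrow> [1,2,3], q \<leftarrow> [1,2,3]] = kron_terms N ?ts"
    by (simp add: kron_terms_def fb_eq_kron2)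
  have ts: "\<forall>(c,p,M)\<in>set ?ts. p \<in> {1,2,3} \<and> M \<in> carrier_mat 2 2"
    by auto
  have nf: "kron_nf N ?ts = curv_nf N j"
    using j
    by (elim insertE emptyE; intro ext;
        simp add: kron_nf_def curv_nf_def pauli_nf_def pauli_coord_def sigma_index eps_def pauli_def field_simps)
  show ?thesis
    using tequiv_kron_terms[OF N ts] unfolding eq nf .
qed

lemma wedge_sum_tequiv_nf:
  assumes N: "N \<ge> 1" and j: "j \<in> {1,2,3}"
  shows "tequiv N (fs [(1 / 4, eb N p, wedge N (eb N p) (eb N j)). p \<leftarrow> [1,2,3]]) (curv_nf N j)"
proof -
  let ?ts = "[(1 / 4 :: complex, p, sigma p * sigma j). p \<leftarrow> [1,2,3]]"
  have eq: "[(1 / 4, eb N p, wedge N (eb N p) (eb N j)). p \<leftarrow> [1,2,3]] = kron_terms N ?ts"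
    by (simp add: kron_terms_def wedge_eb_eb)
  have ts: "\<forall>(c,p,M)\<in>set ?ts. p \<in> {1,2,3} \<and> M \<in> carrier_mat 2 2"
    by (auto intro!: mult_carrier_mat)
  have nf: "kron_nf N ?ts = curv_nf N j"
    using j
    by (elim insertE emptyE; intro ext;
        simp add: kron_nf_def curv_nf_def pauli_nf_def pauli_coord_def sigma_mult_index eps_def pauli_def
          field_simps del: index_mult_mat(1))
  show ?thesis
    using tequiv_kron_terms[OF N ts] unfolding eq nf .
qed

theorem proposition8p8:
  fixes N j :: nat
  assumes "N \<ge> 1" and "j \<in> {1, 2, 3}"
  shows "teq N (curv N j)
           [(- 1 / 4 * eps j p q, eb N p, fb N q). p \<leftarrow> [1,2,3], q \<leftarrow> [1,2,3]]
       \<and> teq N [(- 1 / 4 * eps j p q, eb N p, fb N q). p \<leftarrow> [1,2,3], q \<leftarrow> [1,2,3]]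
           [(1 / 4, eb N p, wedge N (eb N p) (eb N j)). p \<leftarrow> [1,2,3]]"
  unfolding teq_iff_tequiv
  using tequiv_trans[OF curv_tequiv_nf[OF assms] tequiv_sym[OF fb_sum_tequiv_nf[OF assms]]]
    tequiv_trans[OF fb_sum_tequiv_nf[OF assms] tequiv_sym[OF wedge_sum_tequiv_nf[OF assms]]]
  by blast

end
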